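(* Consider the $M_t^{B_t}/M/\infty$ queue described in the context, in which every customer's amount of work is exponentially distributed with rate $\mu>0$. Then for all $t,\delta\ge0$, $$\mathrm{Cov}(Q(t),Q(t+\delta))=\mathrm{Var}(Q(t))\,e^{-\mu\delta}.$$
   Context: Model: batches of customers arrive at the points of a non-homogeneous Poisson process $\{A(t);t\ge0\}$ on $[0,\infty)$ with rate function $\lambda:[0,\infty)\to[0,\infty)$; the batch arriving at time $s$ has a random positive-integer size $B_s$ (law may depend on $s$), batch sizes being independent of each other and of the arrival process. Each customer brings an amount of work that is exponentially distributed with rate $\mu$, independently of everything else. There are infinitely many servers, so a customer arriving at time $s$ with work $S$ departs at time $s+S$. $Q(0)=0$, and $Q(t)$ is the number of customers in the system at time $t$. *)

theory Defs
  imports "HOL-Probability.Probability"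
begin

definition int_rate :: "(real \<Rightarrow> real) \<Rightarrow> real \<Rightarrow> real \<Rightarrow> real" where
  "int_rate lam s t = (LINT u:{s..t}|lborel. lam u)"

definition nh_poisson_process ::
    "'a measure \<Rightarrow> (real \<Rightarrow> real) \<Rightarrow> (real \<Rightarrow> 'a \<Rightarrow> nat) \<Rightarrow> bool" where
  "nh_poisson_process M lam A \<longleftrightarrow>
     prob_space M \<and>
     (\<forall>u. 0 \<le> lam u) \<and> lam \<in> borel_measurable borel \<and>
     (\<forall>t\<ge>0. set_integrable lborel {0..t} lam) \<and>
     (\<forall>t\<ge>0. A t \<in> measurable M (count_space UNIV)) \<and>
     (\<forall>\<omega>\<in>space M. A 0 \<omega> = 0 \<and> mono_on {0..} (\<lambda>t. A t \<omega>) \<and>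
        (\<forall>t\<ge>0. continuous (at_right t) (\<lambda>s. real (A s \<omega>)))) \<and>
     (\<forall>s t n. 0 \<le> s \<longrightarrow> s \<le> t \<longrightarrow>
        measure M {\<omega>\<in>space M. A t \<omega> - A s \<omega> = n}
          = int_rate lam s t ^ n / fact n * exp (- int_rate lam s t)) \<and>
     (\<forall>(tt::nat \<Rightarrow> real) n. 0 \<le> tt 0 \<longrightarrow> mono tt \<longrightarrow>
        prob_space.indep_vars M (\<lambda>_. count_space UNIV)
          (\<lambda>i \<omega>. A (tt (Suc i)) \<omega> - A (tt i) \<omega>) {..<n})"

definition arrival_time :: "(real \<Rightarrow> 'a \<Rightarrow> nat) \<Rightarrow> nat \<Rightarrow> 'a \<Rightarrow> real" where
  "arrival_time A k \<omega> = Inf {t. 0 \<le> t \<and> k \<le> A t \<omega>}"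

definition arrival_events :: "'a measure \<Rightarrow> (real \<Rightarrow> 'a \<Rightarrow> nat) \<Rightarrow> 'a set set" where
  "arrival_events M A =
     sigma_sets (space M) {A t -` {n} \<inter> space M | t n. 0 \<le> t}"

definition arrival_batch_events ::
    "'a measure \<Rightarrow> (real \<Rightarrow> 'a \<Rightarrow> nat) \<Rightarrow> (nat \<Rightarrow> 'a \<Rightarrow> nat) \<Rightarrow> 'a set set" where
  "arrival_batch_events M A B =
     sigma_sets (space M) ({A t -` {n} \<inter> space M | t n. 0 \<le> t} \<union>
                           {B k -` {b} \<inter> space M | k b. 1 \<le> k})"

datatype src_index = ArrBatch | Work nat nat

(*
  The M_t^{B_t}/M/oo model.
  - A: non-homogeneous Poisson arrival process with rate lam;
  - B k: size of the k-th batch (k \<ge> 1); conditionally on the arrival process the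
    batch sizes are independent and the k-th one has law beta (arrival epoch of batch k);
  - S k j: work of the j-th customer of the k-th batch, i.i.d. Exp(mu), independent of
    the arrival process and the batch sizes.
*)
definition batch_model ::
    "'a measure \<Rightarrow> (real \<Rightarrow> real) \<Rightarrow> (real \<Rightarrow> nat pmf) \<Rightarrow> real \<Rightarrow>
     (real \<Rightarrow> 'a \<Rightarrow> nat) \<Rightarrow> (nat \<Rightarrow> 'a \<Rightarrow> nat) \<Rightarrow> (nat \<Rightarrow> nat \<Rightarrow> 'a \<Rightarrow> real) \<Rightarrow> bool" where
  "batch_model M lam beta mu A B S \<longleftrightarrow>
     nh_poisson_process M lam A \<and>
     0 < mu \<and>
     (\<forall>s\<ge>0. pmf (beta s) 0 = 0) \<and>
     (\<forall>b. (\<lambda>s. pmf (beta s) b) \<in> borel_measurable borel) \<and>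
     (\<forall>k\<ge>1. B k \<in> measurable M (count_space UNIV)) \<and>
     (\<forall>(n::nat) (b::nat \<Rightarrow> nat) E. E \<in> arrival_events M A \<longrightarrow>
        E \<subseteq> {\<omega>\<in>space M. \<exists>t\<ge>0. n \<le> A t \<omega>} \<longrightarrow>
        measure M (E \<inter> {\<omega>\<in>space M. \<forall>k\<in>{1..n}. B k \<omega> = b k})
          = (LINT \<omega>:E|M. (\<Prod>k\<in>{1..n}. pmf (beta (arrival_time A k \<omega>)) (b k)))) \<and>
     (\<forall>k\<ge>1. \<forall>j\<ge>1. distributed M lborel (S k j) (\<lambda>x. ennreal (exponential_density mu x))) \<and>
     prob_space.indep_sets M
        (\<lambda>i. case i of ArrBatch \<Rightarrow> arrival_batch_events M A B
                     | Work k j \<Rightarrow> {S k j -` X \<inter> space M | X. X \<in> sets borel})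
        ({ArrBatch} \<union> {Work k j | k j. 1 \<le> k \<and> 1 \<le> j})"

(* Number of customers in the system at time t: customer j of batch k is present at
   time t iff it has arrived by t (k \<le> A t) and has not yet departed
   (t < arrival epoch + work). *)
definition queue_length ::
    "(real \<Rightarrow> 'a \<Rightarrow> nat) \<Rightarrow> (nat \<Rightarrow> 'a \<Rightarrow> nat) \<Rightarrow> (nat \<Rightarrow> nat \<Rightarrow> 'a \<Rightarrow> real) \<Rightarrow> real \<Rightarrow> 'a \<Rightarrow> nat" where
  "queue_length A B S t \<omega> =
     (\<Sum>k\<in>{1..A t \<omega>}. card {j\<in>{1..B k \<omega>}. t < arrival_time A k \<omega> + S k j \<omega>})"

definition variance_of :: "'a measure \<Rightarrow> ('a \<Rightarrow> real) \<Rightarrow> real" where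
  "variance_of M X = (LINT \<omega>|M. (X \<omega> - (LINT \<eta>|M. X \<eta>))\<^sup>2)"

definition covariance_of :: "'a measure \<Rightarrow> ('a \<Rightarrow> real) \<Rightarrow> ('a \<Rightarrow> real) \<Rightarrow> real" where
  "covariance_of M X Y =
     (LINT \<omega>|M. (X \<omega> - (LINT \<eta>|M. X \<eta>)) * (Y \<omega> - (LINT \<eta>|M. Y \<eta>)))"

end

theory Submission
  imports Defs
begin

text \<open>Split the customers present at \<open>t + \<delta>\<close> into those that arrived by \<open>t\<close> and those that arrived
  in \<open>(t, t + \<delta>]\<close>. Given everything except its own exponential work, a customer present at \<open>t\<close> is
  still present at \<open>t + \<delta>\<close> with probability \<open>e\<^sup>-\<^sup>\<mu>\<^sup>\<delta>\<close>; hence the old customers contribute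
  \<open>e\<^sup>-\<^sup>\<mu>\<^sup>\<delta> E[Q(t)\<^sup>2]\<close> to \<open>E[Q(t) Q(t + \<delta>)]\<close> and \<open>e\<^sup>-\<^sup>\<mu>\<^sup>\<delta> E[Q(t)]\<close> to \<open>E[Q(t + \<delta>)]\<close>.
  The new customers are uncorrelated with \<open>Q(t)\<close>: integrating out the works and then the batch
  sizes (conditionally independent given the arrivals) leaves functionals of the Poisson increments
  on \<open>(0, t]\<close> and on \<open>(t, t + \<delta>]\<close>, which are independent. Subtracting \<open>E[Q(t)] E[Q(t + \<delta>)]\<close>
  gives \<open>e\<^sup>-\<^sup>\<mu>\<^sup>\<delta> Var Q(t)\<close>. All expectations are computed as nonnegative integrals of series of
  indicators, which makes every interchange of sums and integrals unconditional.\<close>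

lemma right_continuous_nat_locally_constant:
  fixes f :: "real \<Rightarrow> nat"
  assumes "continuous (at_right t) (\<lambda>s. real (f s))"
  obtains b where "t < b" "\<And>s. t < s \<Longrightarrow> s < b \<Longrightarrow> f s = f t"
proof -
  have "((\<lambda>s. real (f s)) \<longlongrightarrow> real (f t)) (at_right t)"
    using assms by (simp add: continuous_within)
  then have "\<forall>\<^sub>F s in at_right t. dist (real (f s)) (real (f t)) < 1/2"
    by (rule tendstoD) simp
  then obtain b where "t < b" and b: "\<And>s. t < s \<Longrightarrow> s < b \<Longrightarrow> dist (real (f s)) (real (f t)) < 1/2"
    unfolding eventually_at_right[of t "t + 1", simplified] by blast
  moreover have "f s = f t" if "dist (real (f s)) (real (f t)) < 1/2" for s
  proof -
    have "real (f s) < real (Suc (f t))" "real (f t) < real (Suc (f s))"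
      using that unfolding dist_real_def abs_less_iff by auto
    then show ?thesis by simp
  qed
  ultimately show ?thesis using that by blast
qed

lemma Int_stable_vimage_sets: "Int_stable {X -` E \<inter> \<Omega> | E. E \<in> sets N}"
  unfolding Int_stable_def
proof clarify
  fix E E' assume "E \<in> sets N" "E' \<in> sets N"
  then show "\<exists>F. X -` E \<inter> \<Omega> \<inter> (X -` E' \<inter> \<Omega>) = X -` F \<inter> \<Omega> \<and> F \<in> sets N"
    by (intro exI[of _ "E \<inter> E'"]) auto
qed

lemma (in prob_space) indep_set_sigma_sets_partition:
  assumes indep: "indep_sets E I" and stable: "\<And>i. i \<in> I \<Longrightarrow> Int_stable (E i)" and J: "J \<subseteq> I"
  shows "indep_set (sigma_sets (space M) (\<Union>i\<in>J. E i)) (sigma_sets (space M) (\<Union>i\<in>I - J. E i))"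
proof -
  define part where "part b = (if b then J else I - J)" for b
  have "indep_sets (\<lambda>b. sigma_sets (space M) (\<Union>i\<in>part b. E i)) UNIV"
  proof (rule indep_sets_collect_sigma)
    show "indep_sets E (\<Union>b\<in>UNIV. part b)"
      using indep J by (simp add: part_def UNIV_bool Un_absorb2)
    show "disjoint_family_on part UNIV"
      by (auto simp: disjoint_family_on_def part_def)
  qed (use stable J in \<open>auto simp: part_def split: if_splits\<close>)
  then show ?thesis
    unfolding indep_set_def by (rule indep_sets_mono_sets) (auto simp: part_def split: bool.split)
qed

lemma (in prob_space) nn_integral_indep_set_diag:
  assumes N1: "subalgebra M N1" and N2: "subalgebra M N2"
    and indep: "indep_set (sets N1) (sets N2)"
    and h: "h \<in> borel_measurable (N1 \<Otimes>\<^sub>M N2)"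
  shows "(\<integral>\<^sup>+\<omega>. h (\<omega>, \<omega>) \<partial>M) = (\<integral>\<^sup>+\<omega>. \<integral>\<^sup>+\<omega>'. h (\<omega>, \<omega>') \<partial>M \<partial>M)"
proof -
  let ?D1 = "distr M N1 (\<lambda>x. x)" and ?D2 = "distr M N2 (\<lambda>x. x)"
  have rv1: "(\<lambda>x. x) \<in> measurable M N1" and rv2: "(\<lambda>x. x) \<in> measurable M N2"
    using N1 N2 by (auto simp: subalgebra_def measurable_def)
  have vimage1: "{E \<inter> space M | E. E \<in> sets N1} = sets N1"
    using N1 sets.sets_into_space[of _ N1] by (auto simp: subalgebra_def; metis Int_absorb2)
  have vimage2: "{E \<inter> space M | E. E \<in> sets N2} = sets N2"
    using N2 sets.sets_into_space[of _ N2] by (auto simp: subalgebra_def; metis Int_absorb2)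
  have spaces: "space N1 = space M" "space N2 = space M"
    using N1 N2 by (simp_all add: subalgebra_def)
  have "indep_var N1 (\<lambda>x. x) N2 (\<lambda>x. x)"
    unfolding indep_var_eq using rv1 rv2 indep
    by (simp add: vimage1 vimage2 sets.sigma_sets_eq[of N1, unfolded spaces]
        sets.sigma_sets_eq[of N2, unfolded spaces])
  then have joint: "?D1 \<Otimes>\<^sub>M ?D2 = distr M (N1 \<Otimes>\<^sub>M N2) (\<lambda>x. (x, x))"
    unfolding indep_var_distribution_eq by simp
  interpret D1: prob_space ?D1 by (rule prob_space_distr[OF rv1])
  interpret D2: prob_space ?D2 by (rule prob_space_distr[OF rv2])
  interpret D12: pair_sigma_finite ?D1 ?D2 ..
  have h': "h \<in> borel_measurable (?D1 \<Otimes>\<^sub>M ?D2)"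
    using h by (simp cong: measurable_cong_sets)
  have "(\<integral>\<^sup>+\<omega>. h (\<omega>, \<omega>) \<partial>M) = integral\<^sup>N (distr M (N1 \<Otimes>\<^sub>M N2) (\<lambda>x. (x, x))) h"
    by (rule nn_integral_distr[OF measurable_Pair[OF rv1 rv2], symmetric]) (simp add: h)
  also have "\<dots> = (\<integral>\<^sup>+x. \<integral>\<^sup>+y. h (x, y) \<partial>?D2 \<partial>?D1)"
    unfolding joint[symmetric] by (rule D2.nn_integral_fst[symmetric, OF h'])
  also have "\<dots> = (\<integral>\<^sup>+x. \<integral>\<^sup>+y. h (x, y) \<partial>?D2 \<partial>M)"
  proof (rule nn_integral_distr[OF rv1])
    show "(\<lambda>x. \<integral>\<^sup>+y. h (x, y) \<partial>?D2) \<in> borel_measurable ?D1"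
      using D2.borel_measurable_nn_integral_fst[OF h'] by (simp cong: measurable_cong_sets)
  qed
  also have "\<dots> = (\<integral>\<^sup>+x. \<integral>\<^sup>+y. h (x, y) \<partial>M \<partial>M)"
  proof (rule nn_integral_cong)
    fix x assume "x \<in> space M"
    then have "x \<in> space N1" using N1 by (simp add: subalgebra_def)
    then show "(\<integral>\<^sup>+y. h (x, y) \<partial>?D2) = (\<integral>\<^sup>+y. h (x, y) \<partial>M)"
      using measurable_compose_Pair1[OF _ h] by (intro nn_integral_distr[OF rv2]) simp
  qed
  finally show ?thesis .
qed

lemma sigma_sets_sum_level_set:
  fixes D :: "nat \<Rightarrow> 'a \<Rightarrow> nat"
  assumes "I \<subseteq> J"
  shows "{\<omega> \<in> \<Omega>. (\<Sum>l\<in>I. real (D l \<omega>)) = x} \<in>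
    sigma_sets \<Omega> (\<Union>l\<in>J. {D l -` X \<inter> \<Omega> | X. X \<in> sets (count_space UNIV)})"
proof -
  let ?G = "\<Union>l\<in>J. {D l -` X \<inter> \<Omega> | X. X \<in> sets (count_space UNIV)}"
  have G: "?G \<subseteq> Pow \<Omega>" by auto
  have "D l \<in> measurable (sigma \<Omega> ?G) (count_space UNIV)" if "l \<in> J" for l
    unfolding measurable_count_space_eq2_countable using that G
    by (auto simp: space_measure_of_conv intro!: sigma_sets.Basic)
  then have "(\<lambda>\<omega>. \<Sum>l\<in>I. real (D l \<omega>)) \<in> borel_measurable (sigma \<Omega> ?G)"
    using assms by (intro borel_measurable_sum) (auto intro: measurable_compose)
  then have "{\<omega> \<in> space (sigma \<Omega> ?G). (\<Sum>l\<in>I. real (D l \<omega>)) = x} \<in> sets (sigma \<Omega> ?G)" by measurable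
  then show ?thesis using G by (simp add: space_measure_of_conv)
qed

lemma nn_integral_suminf_mult_suminf:
  fixes f g :: "nat \<Rightarrow> 'a \<Rightarrow> ennreal"
  assumes [measurable]: "\<And>k. f k \<in> borel_measurable M" "\<And>k. g k \<in> borel_measurable M"
  shows "(\<integral>\<^sup>+\<omega>. (\<Sum>k. f k \<omega>) * (\<Sum>k. g k \<omega>) \<partial>M) = (\<Sum>k. \<Sum>k'. \<integral>\<^sup>+\<omega>. f k \<omega> * g k' \<omega> \<partial>M)"
proof -
  have "(\<integral>\<^sup>+\<omega>. (\<Sum>k. f k \<omega>) * (\<Sum>k. g k \<omega>) \<partial>M) = (\<integral>\<^sup>+\<omega>. (\<Sum>k. \<Sum>k'. f k \<omega> * g k' \<omega>) \<partial>M)"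
    by (simp only: ennreal_suminf_multc ennreal_suminf_cmult)
  also have "\<dots> = (\<Sum>k. \<integral>\<^sup>+\<omega>. (\<Sum>k'. f k \<omega> * g k' \<omega>) \<partial>M)"
    by (rule nn_integral_suminf) measurable
  also have "\<dots> = (\<Sum>k. \<Sum>k'. \<integral>\<^sup>+\<omega>. f k \<omega> * g k' \<omega> \<partial>M)"
    by (intro suminf_cong nn_integral_suminf) measurable
  finally show ?thesis .
qed

lemma nn_integral_suminf2_mult_suminf2:
  fixes f g :: "nat \<Rightarrow> nat \<Rightarrow> 'a \<Rightarrow> ennreal"
  assumes [measurable]: "\<And>k j. f k j \<in> borel_measurable M" "\<And>k j. g k j \<in> borel_measurable M"
  shows "(\<integral>\<^sup>+\<omega>. (\<Sum>k. \<Sum>j. f k j \<omega>) * (\<Sum>k. \<Sum>j. g k j \<omega>) \<partial>M) =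
         (\<Sum>k. \<Sum>k'. \<Sum>j. \<Sum>j'. \<integral>\<^sup>+\<omega>. f k j \<omega> * g k' j' \<omega> \<partial>M)"
proof -
  have "(\<integral>\<^sup>+\<omega>. (\<Sum>k. \<Sum>j. f k j \<omega>) * (\<Sum>k. \<Sum>j. g k j \<omega>) \<partial>M) =
        (\<Sum>k. \<Sum>k'. \<integral>\<^sup>+\<omega>. (\<Sum>j. f k j \<omega>) * (\<Sum>j. g k' j \<omega>) \<partial>M)"
    by (rule nn_integral_suminf_mult_suminf) measurable
  also have "\<dots> = (\<Sum>k. \<Sum>k'. \<Sum>j. \<Sum>j'. \<integral>\<^sup>+\<omega>. f k j \<omega> * g k' j' \<omega> \<partial>M)"
    by (simp only: nn_integral_suminf_mult_suminf[of "f _" M "g _"] assms)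
  finally show ?thesis .
qed

lemma nn_integral_suminf2:
  fixes f :: "nat \<Rightarrow> nat \<Rightarrow> 'a \<Rightarrow> ennreal"
  assumes [measurable]: "\<And>k j. f k j \<in> borel_measurable M"
  shows "(\<integral>\<^sup>+\<omega>. (\<Sum>k. \<Sum>j. f k j \<omega>) \<partial>M) = (\<Sum>k. \<Sum>j. \<integral>\<^sup>+\<omega>. f k j \<omega> \<partial>M)"
proof -
  have "(\<integral>\<^sup>+\<omega>. (\<Sum>k. \<Sum>j. f k j \<omega>) \<partial>M) = (\<Sum>k. \<integral>\<^sup>+\<omega>. (\<Sum>j. f k j \<omega>) \<partial>M)"
    by (rule nn_integral_suminf) measurable
  also have "\<dots> = (\<Sum>k. \<Sum>j. \<integral>\<^sup>+\<omega>. f k j \<omega> \<partial>M)"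
    by (intro suminf_cong nn_integral_suminf) measurable
  finally show ?thesis .
qed

lemma nn_integral_suminf_cmult:
  fixes c :: "nat \<Rightarrow> ennreal"
  assumes "\<And>v. g v \<in> borel_measurable M"
  shows "(\<integral>\<^sup>+\<omega>. (\<Sum>v. c v * g v \<omega>) \<partial>M) = (\<Sum>v. c v * (\<integral>\<^sup>+\<omega>. g v \<omega> \<partial>M))"
  using assms by (simp add: nn_integral_suminf nn_integral_cmult)

lemma nn_integral_measure_pmf_nat:
  fixes p :: "nat pmf"
  shows "(\<integral>\<^sup>+v. f v \<partial>measure_pmf p) = (\<Sum>v. ennreal (pmf p v) * f v)"
  by (simp add: nn_integral_measure_pmf nn_integral_count_space_nat)

definition dyadic_index :: "real \<Rightarrow> real \<Rightarrow> real \<Rightarrow> nat \<Rightarrow> nat" where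
  "dyadic_index a L y N = nat \<lceil>(y - a) * 2^N / L\<rceil>"

lemma dyadic_index_le:
  assumes "0 < L" "a \<le> y" "y < a + L"
  shows "dyadic_index a L y N \<le> 2^N"
proof -
  have "(y - a) * 2^N / L \<le> 2^N" using assms by (simp add: pos_divide_le_eq)
  then show ?thesis unfolding dyadic_index_def by (simp add: ceiling_le_iff nat_le_iff)
qed

lemma dyadic_point_ge:
  assumes "0 < L"
  shows "y \<le> a + L * real (dyadic_index a L y N) / 2^N"
proof -
  have "(y - a) * 2^N / L \<le> real (dyadic_index a L y N)"
    unfolding dyadic_index_def by (rule real_nat_ceiling_ge)
  then show ?thesis using assms by (simp add: field_simps)
qed

lemma dyadic_point_less:
  assumes "0 < L" "a \<le> y"
  shows "a + L * real (dyadic_index a L y N) / 2^N < y + L / 2^N"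
proof -
  have "real (dyadic_index a L y N) < (y - a) * 2^N / L + 1"
    using assms ceiling_correct[of "(y - a) * 2^N / L"] by (simp add: dyadic_index_def)
  then have "L * real (dyadic_index a L y N) < (y - a) * 2^N + L"
    using assms by (simp add: field_simps)
  then have "L * real (dyadic_index a L y N) / 2^N < ((y - a) * 2^N + L) / 2^N"
    by (intro divide_strict_right_mono) auto
  also have "\<dots> = y - a + L / 2^N" by (simp add: field_simps)
  finally show ?thesis by simp
qed

lemma integrable_mult_of_square_integrable:
  fixes X Y :: "'a \<Rightarrow> real"
  assumes "X \<in> borel_measurable M" "Y \<in> borel_measurable M"
    and "integrable M (\<lambda>\<omega>. (X \<omega>)\<^sup>2)" "integrable M (\<lambda>\<omega>. (Y \<omega>)\<^sup>2)"
  shows "integrable M (\<lambda>\<omega>. X \<omega> * Y \<omega>)"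
proof (rule Bochner_Integration.integrable_bound[OF Bochner_Integration.integrable_add[OF assms(3,4)]])
  show "(\<lambda>\<omega>. X \<omega> * Y \<omega>) \<in> borel_measurable M" using assms(1,2) by measurable
  show "AE \<omega> in M. norm (X \<omega> * Y \<omega>) \<le> norm ((X \<omega>)\<^sup>2 + (Y \<omega>)\<^sup>2)"
  proof (rule AE_I2)
    fix \<omega>
    have "0 \<le> (\<bar>X \<omega>\<bar> - \<bar>Y \<omega>\<bar>)\<^sup>2" by simp
    then have "2 * \<bar>X \<omega> * Y \<omega>\<bar> \<le> (X \<omega>)\<^sup>2 + (Y \<omega>)\<^sup>2" by (simp add: power2_diff abs_mult)
    then show "norm (X \<omega> * Y \<omega>) \<le> norm ((X \<omega>)\<^sup>2 + (Y \<omega>)\<^sup>2)" by simp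
  qed
qed

lemma (in prob_space) covariance_of_eq:
  fixes X Y :: "'a \<Rightarrow> real"
  assumes X: "integrable M X" and Y: "integrable M Y" and XY: "integrable M (\<lambda>\<omega>. X \<omega> * Y \<omega>)"
  shows "covariance_of M X Y = expectation (\<lambda>\<omega>. X \<omega> * Y \<omega>) - expectation X * expectation Y"
proof -
  let ?a = "expectation X" and ?b = "expectation Y"
  have "(\<lambda>\<omega>. (X \<omega> - ?a) * (Y \<omega> - ?b)) = (\<lambda>\<omega>. (X \<omega> * Y \<omega> - ?b * X \<omega>) - (?a * Y \<omega> - ?a * ?b))"
    by (auto simp: algebra_simps)
  then have "covariance_of M X Y = expectation (\<lambda>\<omega>. (X \<omega> * Y \<omega> - ?b * X \<omega>) - (?a * Y \<omega> - ?a * ?b))"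
    by (simp add: covariance_of_def)
  also have "\<dots> = (expectation (\<lambda>\<omega>. X \<omega> * Y \<omega>) - ?b * ?a) - (?a * ?b - ?a * ?b)"
    using X Y XY by (simp add: Bochner_Integration.integral_diff prob_space)
  finally show ?thesis by simp
qed

lemma (in prob_space) covariance_of_eq_variance_of_mult:
  fixes X Y :: "'a \<Rightarrow> real" and r :: real and n :: ennreal
  assumes X: "X \<in> borel_measurable M" "\<And>\<omega>. 0 \<le> X \<omega>" "integrable M (\<lambda>\<omega>. (X \<omega>)\<^sup>2)"
    and Y: "Y \<in> borel_measurable M" "\<And>\<omega>. 0 \<le> Y \<omega>" "integrable M (\<lambda>\<omega>. (Y \<omega>)\<^sup>2)"
    and r: "0 \<le> r"
    and mean: "(\<integral>\<^sup>+\<omega>. ennreal (Y \<omega>) \<partial>M) = ennreal r * (\<integral>\<^sup>+\<omega>. ennreal (X \<omega>) \<partial>M) + n"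
    and cross: "(\<integral>\<^sup>+\<omega>. ennreal (X \<omega> * Y \<omega>) \<partial>M) =
      ennreal r * (\<integral>\<^sup>+\<omega>. ennreal (X \<omega> * X \<omega>) \<partial>M) + (\<integral>\<^sup>+\<omega>. ennreal (X \<omega>) \<partial>M) * n"
  shows "covariance_of M X Y = variance_of M X * r"
proof -
  have iX: "integrable M X" by (rule square_integrable_imp_integrable[OF X(1,3)])
  have iY: "integrable M Y" by (rule square_integrable_imp_integrable[OF Y(1,3)])
  have iXX: "integrable M (\<lambda>\<omega>. X \<omega> * X \<omega>)" using X(3) by (simp add: power2_eq_square)
  have iXY: "integrable M (\<lambda>\<omega>. X \<omega> * Y \<omega>)"
    by (rule integrable_mult_of_square_integrable[OF X(1) Y(1) X(3) Y(3)])
  have expectation: "(\<integral>\<^sup>+\<omega>. ennreal (f \<omega>) \<partial>M) = ennreal (expectation f)" "0 \<le> expectation f"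
    if "integrable M f" "\<And>\<omega>. 0 \<le> f \<omega>" for f
    using that by (intro nn_integral_eq_integral integral_nonneg_AE AE_I2; simp)+
  note moments = expectation[OF iX X(2)] expectation[OF iY Y(2)]
    expectation[OF iXX] expectation[OF iXY] X(2) Y(2)
  have "n \<le> ennreal r * (\<integral>\<^sup>+\<omega>. ennreal (X \<omega>) \<partial>M) + n" by (rule add_increasing) simp_all
  then have "n \<le> ennreal (expectation Y)" using mean moments by simp
  then obtain n' where n: "n = ennreal n'" "0 \<le> n'" by (cases n rule: ennreal_cases) (auto simp: top_unique)
  have "ennreal (expectation Y) = ennreal (r * expectation X + n')"
    using mean moments r n by (simp add: ennreal_mult)
  then have eY: "expectation Y = r * expectation X + n'"
    using moments r n by (subst (asm) ennreal_inj) auto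
  have "ennreal (expectation (\<lambda>\<omega>. X \<omega> * Y \<omega>)) =
      ennreal (r * expectation (\<lambda>\<omega>. X \<omega> * X \<omega>) + expectation X * n')"
    using cross moments r n by (simp add: ennreal_mult)
  then have eXY: "expectation (\<lambda>\<omega>. X \<omega> * Y \<omega>) = r * expectation (\<lambda>\<omega>. X \<omega> * X \<omega>) + expectation X * n'"
    using moments r n by (subst (asm) ennreal_inj) auto
  have var: "variance_of M X = expectation (\<lambda>\<omega>. X \<omega> * X \<omega>) - expectation X * expectation X"
    using covariance_of_eq[OF iX iX iXX] by (simp add: variance_of_def covariance_of_def power2_eq_square)
  show ?thesis
    unfolding covariance_of_eq[OF iX iY iXY] var eY eXY by (simp add: algebra_simps)
qed

locale batch_queue =
  fixes M :: "'a measure" and lam :: "real \<Rightarrow> real" and beta :: "real \<Rightarrow> nat pmf"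
    and mu :: real and A :: "real \<Rightarrow> 'a \<Rightarrow> nat" and B :: "nat \<Rightarrow> 'a \<Rightarrow> nat"
    and S :: "nat \<Rightarrow> nat \<Rightarrow> 'a \<Rightarrow> real"
  assumes model: "batch_model M lam beta mu A B S"
begin

lemma arrivals_poisson: "nh_poisson_process M lam A"
  using model unfolding batch_model_def by blast

sublocale prob_space M
  using arrivals_poisson unfolding nh_poisson_process_def by blast

lemma mu_pos: "0 < mu"
  using model unfolding batch_model_def by blast

lemma measurable_arrivals: "0 \<le> t \<Longrightarrow> A t \<in> measurable M (count_space UNIV)"
  using arrivals_poisson unfolding nh_poisson_process_def by blast

lemma arrivals_zero: "\<omega> \<in> space M \<Longrightarrow> A 0 \<omega> = 0"
  using arrivals_poisson unfolding nh_poisson_process_def by blast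

lemma arrivals_mono: "\<omega> \<in> space M \<Longrightarrow> 0 \<le> s \<Longrightarrow> s \<le> t \<Longrightarrow> A s \<omega> \<le> A t \<omega>"
  using arrivals_poisson unfolding nh_poisson_process_def mono_on_def by auto

lemma arrivals_right_continuous:
  "\<omega> \<in> space M \<Longrightarrow> 0 \<le> t \<Longrightarrow> continuous (at_right t) (\<lambda>s. real (A s \<omega>))"
  using arrivals_poisson unfolding nh_poisson_process_def by blast

lemma indep_increments:
  "0 \<le> tt 0 \<Longrightarrow> mono tt \<Longrightarrow>
     indep_vars (\<lambda>_. count_space UNIV) (\<lambda>i \<omega>. A (tt (Suc i)) \<omega> - A (tt i) \<omega>) {..<n}"
  using arrivals_poisson unfolding nh_poisson_process_def by blast

lemma measurable_batch: "1 \<le> k \<Longrightarrow> B k \<in> measurable M (count_space UNIV)"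
  using model unfolding batch_model_def by blast

lemma borel_measurable_pmf_beta: "(\<lambda>s. pmf (beta s) b) \<in> borel_measurable borel"
  using model unfolding batch_model_def by blast

lemma work_exponential:
  "1 \<le> k \<Longrightarrow> 1 \<le> j \<Longrightarrow> distributed M lborel (S k j) (\<lambda>x. ennreal (exponential_density mu x))"
  using model unfolding batch_model_def by blast

lemma borel_measurable_work: "1 \<le> k \<Longrightarrow> 1 \<le> j \<Longrightarrow> S k j \<in> borel_measurable M"
  using distributed_measurable[OF work_exponential] by simp

section \<open>Arrival epochs\<close>

lemma arrival_time_le_iff:
  assumes \<omega>: "\<omega> \<in> space M" and s: "0 \<le> s" "k \<le> A s \<omega>"
  shows "arrival_time A k \<omega> \<le> x \<longleftrightarrow> 0 \<le> x \<and> k \<le> A x \<omega>"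
proof -
  define T where "T = {t. 0 \<le> t \<and> k \<le> A t \<omega>}"
  have "s \<in> T" using s by (simp add: T_def)
  have bdd: "bdd_below T" unfolding T_def by (rule bdd_belowI[of _ 0]) auto
  define \<tau> where "\<tau> = Inf T"
  have \<tau>_eq: "arrival_time A k \<omega> = \<tau>" unfolding arrival_time_def \<tau>_def T_def ..
  have \<tau>_nonneg: "0 \<le> \<tau>" unfolding \<tau>_def using \<open>s \<in> T\<close> by (intro cInf_greatest) (auto simp: T_def)
  have \<tau>_reached: "k \<le> A \<tau> \<omega>"
  proof (rule ccontr)
    assume not_reached: "\<not> k \<le> A \<tau> \<omega>"
    obtain b where "\<tau> < b" and const: "\<And>y. \<tau> < y \<Longrightarrow> y < b \<Longrightarrow> A y \<omega> = A \<tau> \<omega>"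
      using right_continuous_nat_locally_constant[OF arrivals_right_continuous[OF \<omega> \<tau>_nonneg]]
      by blast
    then obtain y where "y \<in> T" "y < b"
      using cInf_less_iff[of T b] \<open>s \<in> T\<close> bdd by (auto simp: \<tau>_def)
    moreover have "\<tau> \<le> y" unfolding \<tau>_def by (rule cInf_lower[OF \<open>y \<in> T\<close> bdd])
    ultimately have "A y \<omega> = A \<tau> \<omega>" using const by (cases "y = \<tau>") auto
    then show False using \<open>y \<in> T\<close> not_reached by (simp add: T_def)
  qed
  show ?thesis
  proof
    assume "arrival_time A k \<omega> \<le> x"
    then show "0 \<le> x \<and> k \<le> A x \<omega>"
      using \<tau>_eq \<tau>_nonneg \<tau>_reached arrivals_mono[OF \<omega> \<tau>_nonneg, of x] by auto
  next
    assume "0 \<le> x \<and> k \<le> A x \<omega>"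
    then show "arrival_time A k \<omega> \<le> x"
      unfolding \<tau>_eq \<tau>_def by (intro cInf_lower[OF _ bdd]) (simp add: T_def)
  qed
qed

lemma arrival_time_le: "\<omega> \<in> space M \<Longrightarrow> 0 \<le> s \<Longrightarrow> k \<le> A s \<omega> \<Longrightarrow> arrival_time A k \<omega> \<le> s"
  using arrival_time_le_iff by blast

definition arrived :: "nat \<Rightarrow> 'a set" where
  "arrived k = {\<omega> \<in> space M. \<exists>s\<ge>0. k \<le> A s \<omega>}"

definition arrival_sigma :: "'a measure" where
  "arrival_sigma = sigma (space M) {A t -` {n} \<inter> space M | t n. 0 \<le> t}"

lemma space_arrival_sigma [simp]: "space arrival_sigma = space M"
  by (simp add: arrival_sigma_def space_measure_of_conv)

lemma sets_arrival_sigma: "sets arrival_sigma = arrival_events M A"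
  unfolding arrival_sigma_def arrival_events_def by (subst sets_measure_of) auto

lemma subalgebra_arrival_sigma: "subalgebra M arrival_sigma"
  unfolding subalgebra_def sets_arrival_sigma arrival_events_def
  by (auto intro!: sets.sigma_sets_subset measurable_sets[OF measurable_arrivals])

lemma measurable_arrivals_arrival_sigma:
  "0 \<le> t \<Longrightarrow> A t \<in> measurable arrival_sigma (count_space UNIV)"
  unfolding measurable_count_space_eq2_countable sets_arrival_sigma arrival_events_def by auto

lemma arrived_in_arrival_sigma: "arrived k \<in> sets arrival_sigma"
proof -
  have "arrived k = (\<Union>m::nat. {\<omega> \<in> space arrival_sigma. k \<le> A (real m) \<omega>})"
  proof safe
    fix \<omega> assume "\<omega> \<in> arrived k"
    then obtain s where \<omega>: "\<omega> \<in> space M" and s: "0 \<le> s" "k \<le> A s \<omega>"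
      by (auto simp: arrived_def)
    obtain m :: nat where "s \<le> real m" using real_arch_simple by blast
    then show "\<omega> \<in> (\<Union>m::nat. {\<omega> \<in> space arrival_sigma. k \<le> A (real m) \<omega>})"
      using \<omega> s arrivals_mono[OF \<omega> s(1), of "real m"] by (auto intro!: exI[of _ m])
  next
    fix \<omega> m assume "\<omega> \<in> space arrival_sigma" "k \<le> A (real m) \<omega>"
    then show "\<omega> \<in> arrived k" unfolding arrived_def by (intro CollectI conjI exI[of _ "real m"]) auto
  qed
  also have "\<dots> \<in> sets arrival_sigma"
    using measurable_arrivals_arrival_sigma by measurable
  finally show ?thesis .
qed

lemma borel_measurable_arrival_time: "arrival_time A k \<in> borel_measurable arrival_sigma"
proof (rule borel_measurableI_le)
  fix y :: real
  have "{\<omega> \<in> space arrival_sigma. arrival_time A k \<omega> \<le> y} =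
      (arrived k \<inter> {\<omega> \<in> space arrival_sigma. 0 \<le> y \<and> k \<le> A (max y 0) \<omega>}) \<union>
      {\<omega> \<in> space arrival_sigma. \<omega> \<notin> arrived k \<and> Inf {} \<le> y}" (is "?L = ?R")
  proof (intro set_eqI)
    fix \<omega> show "\<omega> \<in> ?L \<longleftrightarrow> \<omega> \<in> ?R"
    proof (cases "\<omega> \<in> arrived k")
      case True
      then obtain s where "\<omega> \<in> space M" "0 \<le> s" "k \<le> A s \<omega>" by (auto simp: arrived_def)
      then show ?thesis using True by (auto simp: arrival_time_le_iff max_def)
    next
      case False
      \<comment> \<open>a batch that never arrives gets the junk epoch \<open>Inf {}\<close>\<close>
      then have "\<omega> \<in> space M \<Longrightarrow> arrival_time A k \<omega> = Inf {}"
        by (auto simp: arrived_def arrival_time_def intro!: arg_cong[where f = Inf])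
      then show ?thesis using False by auto
    qed
  qed
  also have "\<dots> \<in> sets arrival_sigma"
    using arrived_in_arrival_sigma measurable_arrivals_arrival_sigma[of "max y 0"] by measurable
  finally show "{\<omega> \<in> space arrival_sigma. arrival_time A k \<omega> \<le> y} \<in> sets arrival_sigma" .
qed

lemma borel_measurable_arrival_time_M: "arrival_time A k \<in> borel_measurable M"
  by (rule measurable_from_subalg[OF subalgebra_arrival_sigma borel_measurable_arrival_time])

section \<open>Integrating out the works\<close>

definition sources :: "src_index set" where
  "sources = {ArrBatch} \<union> {Work k j | k j. 1 \<le> k \<and> 1 \<le> j}"

definition source_events :: "src_index \<Rightarrow> 'a set set" where
  "source_events i = (case i of ArrBatch \<Rightarrow> arrival_batch_events M A B
                               | Work k j \<Rightarrow> {S k j -` X \<inter> space M | X. X \<in> sets borel})"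

lemma indep_sources: "indep_sets source_events sources"
  using model unfolding batch_model_def source_events_def sources_def by blast

lemma source_events_subset: "i \<in> sources \<Longrightarrow> source_events i \<subseteq> sets M"
  using indep_sources by (auto simp: indep_sets_def)

lemma Int_stable_source_events: "i \<in> sources \<Longrightarrow> Int_stable (source_events i)"
proof (cases i)
  case ArrBatch
  have "{A t -` {n} \<inter> space M | t n. 0 \<le> t} \<union> {B k -` {b} \<inter> space M | k b. 1 \<le> k} \<subseteq> Pow (space M)"
    by auto
  then interpret sigma_algebra "space M" "arrival_batch_events M A B"
    unfolding arrival_batch_events_def by (rule sigma_algebra_sigma_sets)
  show ?thesis using ArrBatch Int_stable by (simp add: source_events_def)
qed (simp add: source_events_def Int_stable_vimage_sets)

definition without_work :: "nat \<Rightarrow> nat \<Rightarrow> 'a measure" where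
  "without_work k j = sigma (space M) (\<Union>i \<in> sources - {Work k j}. source_events i)"

lemma space_without_work [simp]: "space (without_work k j) = space M"
  by (simp add: without_work_def space_measure_of_conv)

lemma sets_without_work:
  "sets (without_work k j) = sigma_sets (space M) (\<Union>i \<in> sources - {Work k j}. source_events i)"
  unfolding without_work_def using source_events_subset sets.sets_into_space
  by (subst sets_measure_of) blast+

lemma subalgebra_without_work: "subalgebra M (without_work k j)"
  unfolding subalgebra_def sets_without_work using source_events_subset
  by (auto intro!: sets.sigma_sets_subset)

lemma arrival_batch_events_without_work: "arrival_batch_events M A B \<subseteq> sets (without_work k j)"
  unfolding sets_without_work
  by (intro subsetI sigma_sets.Basic UN_I[of ArrBatch]) (auto simp: sources_def source_events_def)

lemma arrival_sigma_without_work: "sets arrival_sigma \<subseteq> sets (without_work k j)"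
  using arrival_batch_events_without_work
  unfolding sets_arrival_sigma arrival_events_def arrival_batch_events_def
  by (meson order.trans sigma_sets_mono' Un_upper1)

lemma measurable_arrival_sigma_without_work:
  "f \<in> measurable arrival_sigma N \<Longrightarrow> f \<in> measurable (without_work k j) N"
  using measurable_mono[of N N arrival_sigma "without_work k j"] arrival_sigma_without_work by auto

lemma measurable_arrivals_without_work:
  "0 \<le> t \<Longrightarrow> A t \<in> measurable (without_work k j) (count_space UNIV)"
  by (intro measurable_arrival_sigma_without_work measurable_arrivals_arrival_sigma)

lemma borel_measurable_arrival_time_without_work:
  "arrival_time A k' \<in> borel_measurable (without_work k j)"
  by (intro measurable_arrival_sigma_without_work borel_measurable_arrival_time)

lemma measurable_batch_without_work:
  assumes "1 \<le> k'"
  shows "B k' \<in> measurable (without_work k j) (count_space UNIV)"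
proof -
  have "B k' -` {b} \<inter> space M \<in> arrival_batch_events M A B" for b
    using assms unfolding arrival_batch_events_def by (intro sigma_sets.Basic) blast
  then show ?thesis
    unfolding measurable_count_space_eq2_countable using arrival_batch_events_without_work by auto
qed

lemma borel_measurable_work_without_work:
  assumes "1 \<le> k'" "1 \<le> j'" "(k', j') \<noteq> (k, j)"
  shows "S k' j' \<in> borel_measurable (without_work k j)"
proof (rule measurableI)
  fix X :: "real set" assume "X \<in> sets borel"
  then show "S k' j' -` X \<inter> space (without_work k j) \<in> sets (without_work k j)"
    using assms unfolding sets_without_work
    by (intro sigma_sets.Basic UN_I[of "Work k' j'"]) (auto simp: sources_def source_events_def)
qed simp

lemma indep_without_work:
  assumes "1 \<le> k" "1 \<le> j"
  shows "indep_set (sets (without_work k j)) (sets (vimage_algebra (space M) (S k j) borel))"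
proof -
  have "sources - (sources - {Work k j}) = {Work k j}"
    using assms by (auto simp: sources_def)
  then have "indep_set (sigma_sets (space M) (\<Union>i\<in>sources - {Work k j}. source_events i))
      (sigma_sets (space M) (\<Union>i\<in>{Work k j}. source_events i))"
    using indep_set_sigma_sets_partition[OF indep_sources Int_stable_source_events, of "sources - {Work k j}"]
    by simp
  then show ?thesis
    by (simp add: sets_without_work sets_vimage_algebra source_events_def)
qed

lemma nn_integral_work_survival:
  assumes kj: "1 \<le> k" "1 \<le> j"
    and Z: "Z \<in> borel_measurable (without_work k j)" and a: "a \<in> borel_measurable (without_work k j)"
    and a_nonneg: "\<And>\<omega>. \<omega> \<in> space M \<Longrightarrow> Z \<omega> \<noteq> 0 \<Longrightarrow> 0 \<le> a \<omega>"
  shows "(\<integral>\<^sup>+\<omega>. Z \<omega> * (if a \<omega> < S k j \<omega> then 1 else 0) \<partial>M) = (\<integral>\<^sup>+\<omega>. Z \<omega> * ennreal (exp (- a \<omega> * mu)) \<partial>M)"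
proof -
  let ?W = "vimage_algebra (space M) (S k j) borel"
  have W: "subalgebra M ?W"
    using measurable_sets[OF borel_measurable_work[OF kj]]
    by (auto simp: subalgebra_def sets_vimage_algebra2)
  have h: "(\<lambda>p. Z (fst p) * (if a (fst p) < S k j (snd p) then 1 else 0)) \<in> borel_measurable (without_work k j \<Otimes>\<^sub>M ?W)"
    using Z a measurable_vimage_algebra1[of "S k j" "space M" borel] by measurable
  have "(\<integral>\<^sup>+\<omega>. Z \<omega> * (if a \<omega> < S k j \<omega> then 1 else 0) \<partial>M) =
      (\<integral>\<^sup>+\<omega>. \<integral>\<^sup>+\<omega>'. Z \<omega> * (if a \<omega> < S k j \<omega>' then 1 else 0) \<partial>M \<partial>M)"
    using nn_integral_indep_set_diag[OF subalgebra_without_work W indep_without_work[OF kj] h] by simp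
  also have "\<dots> = (\<integral>\<^sup>+\<omega>. Z \<omega> * ennreal (exp (- a \<omega> * mu)) \<partial>M)"
  proof (rule nn_integral_cong)
    fix \<omega> assume \<omega>: "\<omega> \<in> space M"
    show "(\<integral>\<^sup>+\<omega>'. Z \<omega> * (if a \<omega> < S k j \<omega>' then 1 else 0) \<partial>M) = Z \<omega> * ennreal (exp (- a \<omega> * mu))"
    proof (cases "Z \<omega> = 0")
      case False
      have event: "{\<omega>' \<in> space M. a \<omega> < S k j \<omega>'} \<in> sets M"
        using borel_measurable_work[OF kj] by measurable
      have "(\<integral>\<^sup>+\<omega>'. Z \<omega> * (if a \<omega> < S k j \<omega>' then 1 else 0) \<partial>M) =
          (\<integral>\<^sup>+\<omega>'. Z \<omega> * indicator {\<omega>' \<in> space M. a \<omega> < S k j \<omega>'} \<omega>' \<partial>M)"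
        by (rule nn_integral_cong) (auto simp: indicator_def)
      also have "\<dots> = Z \<omega> * emeasure M {\<omega>' \<in> space M. a \<omega> < S k j \<omega>'}"
        by (rule nn_integral_cmult_indicator[OF event])
      also have "emeasure M {\<omega>' \<in> space M. a \<omega> < S k j \<omega>'} = ennreal (exp (- a \<omega> * mu))"
        using exponential_distributedD_gt[OF work_exponential[OF kj] a_nonneg[OF \<omega> False] mu_pos]
        by (simp add: emeasure_eq_measure)
      finally show ?thesis .
    qed simp
  qed
  finally show ?thesis .
qed

section \<open>Customers present in an arrival window\<close>

text \<open>Batches are numbered in order of arrival, so batch \<open>k\<close> arrives in the window \<open>(a, b]\<close> iff
  \<open>A a < k \<le> A b\<close>; customers of a batch are numbered from \<open>1\<close>.\<close>

definition present :: "real \<Rightarrow> real \<Rightarrow> real \<Rightarrow> nat \<Rightarrow> nat \<Rightarrow> 'a \<Rightarrow> ennreal" where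
  "present v a b k j \<omega> = (if A a \<omega> < k \<and> k \<le> A b \<omega> \<and> 1 \<le> j \<and> j \<le> B k \<omega>
     \<and> v < arrival_time A k \<omega> + S k j \<omega> then 1 else 0)"

definition survival_weight :: "real \<Rightarrow> real \<Rightarrow> real \<Rightarrow> nat \<Rightarrow> nat \<Rightarrow> 'a \<Rightarrow> ennreal" where
  "survival_weight v a b k j \<omega> = (if A a \<omega> < k \<and> k \<le> A b \<omega> \<and> 1 \<le> j \<and> j \<le> B k \<omega>
     then ennreal (exp (- (v - arrival_time A k \<omega>) * mu)) else 0)"

definition present_count :: "real \<Rightarrow> real \<Rightarrow> real \<Rightarrow> 'a \<Rightarrow> ennreal" where
  "present_count v a b \<omega> = (\<Sum>k. \<Sum>j. present v a b k j \<omega>)"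

lemma survival_weight_shift:
  "survival_weight (v + \<delta>) a b k j \<omega> = ennreal (exp (- \<delta> * mu)) * survival_weight v a b k j \<omega>"
proof -
  have "exp (- (v + \<delta> - arrival_time A k \<omega>) * mu) = exp (- \<delta> * mu) * exp (- (v - arrival_time A k \<omega>) * mu)"
    by (simp add: exp_add[symmetric] algebra_simps)
  then show ?thesis by (simp add: survival_weight_def ennreal_mult')
qed

lemma borel_measurable_present_without_work:
  assumes "0 \<le> a" "0 \<le> b" "(k, j) \<noteq> (k', j')"
  shows "present v a b k j \<in> borel_measurable (without_work k' j')"
proof (cases "1 \<le> k \<and> 1 \<le> j")
  case True
  then have "1 \<le> k" "1 \<le> j" by auto
  note [measurable] = measurable_arrivals_without_work[OF assms(1)] measurable_arrivals_without_work[OF assms(2)]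
    measurable_batch_without_work[OF \<open>1 \<le> k\<close>] borel_measurable_arrival_time_without_work
    borel_measurable_work_without_work[OF \<open>1 \<le> k\<close> \<open>1 \<le> j\<close> assms(3)]
  show ?thesis unfolding present_def by measurable
next
  case False
  then have "present v a b k j = (\<lambda>_. 0)" by (auto simp: present_def fun_eq_iff)
  then show ?thesis by simp
qed

lemma pred_batch_window_without_work:
  assumes "0 \<le> a" "0 \<le> b"
  shows "Measurable.pred (without_work k' j') (\<lambda>\<omega>. A a \<omega> < k \<and> k \<le> A b \<omega> \<and> 1 \<le> j \<and> j \<le> B k \<omega>)"
proof (cases "1 \<le> k")
  case True
  then show ?thesis
    using measurable_arrivals_without_work[OF assms(1)] measurable_arrivals_without_work[OF assms(2)]
      measurable_batch_without_work[OF True] by measurable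
qed simp

lemma borel_measurable_survival_weight_without_work:
  assumes "0 \<le> a" "0 \<le> b"
  shows "survival_weight v a b k j \<in> borel_measurable (without_work k' j')"
proof -
  have "(\<lambda>\<omega>. ennreal (exp (- (v - arrival_time A k \<omega>) * mu))) \<in> borel_measurable (without_work k' j')"
    using borel_measurable_arrival_time_without_work by measurable
  then show ?thesis
    unfolding survival_weight_def using pred_batch_window_without_work[OF assms]
    by (intro measurable_If) (auto simp: pred_def)
qed

lemma borel_measurable_present: "0 \<le> a \<Longrightarrow> 0 \<le> b \<Longrightarrow> present v a b k j \<in> borel_measurable M"
  by (rule measurable_from_subalg[OF subalgebra_without_work borel_measurable_present_without_work,
        of _ _ k j k "Suc j"]) auto

lemma borel_measurable_survival_weight:
  "0 \<le> a \<Longrightarrow> 0 \<le> b \<Longrightarrow> survival_weight v a b k j \<in> borel_measurable M"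
  by (rule measurable_from_subalg[OF subalgebra_without_work[of 0 0]])
    (rule borel_measurable_survival_weight_without_work)

lemma borel_measurable_present_count:
  "0 \<le> a \<Longrightarrow> 0 \<le> b \<Longrightarrow> present_count v a b \<in> borel_measurable M"
  unfolding present_count_def using borel_measurable_present by measurable

lemma nn_integral_present:
  assumes a: "0 \<le> a" and b: "0 \<le> b" "b \<le> v" and Z: "Z \<in> borel_measurable (without_work k j)"
  shows "(\<integral>\<^sup>+\<omega>. Z \<omega> * present v a b k j \<omega> \<partial>M) = (\<integral>\<^sup>+\<omega>. Z \<omega> * survival_weight v a b k j \<omega> \<partial>M)"
proof (cases "1 \<le> k \<and> 1 \<le> j")
  case True
  define Z' where
    "Z' \<omega> = Z \<omega> * (if A a \<omega> < k \<and> k \<le> A b \<omega> \<and> 1 \<le> j \<and> j \<le> B k \<omega> then 1 else 0)" for \<omega>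
  have Z': "Z' \<in> borel_measurable (without_work k j)"
    unfolding Z'_def using Z pred_batch_window_without_work[OF a b(1), of k j k j] by measurable
  have "(\<integral>\<^sup>+\<omega>. Z \<omega> * present v a b k j \<omega> \<partial>M) =
      (\<integral>\<^sup>+\<omega>. Z' \<omega> * (if v - arrival_time A k \<omega> < S k j \<omega> then 1 else 0) \<partial>M)"
    by (intro nn_integral_cong) (auto simp: Z'_def present_def)
  also have "\<dots> = (\<integral>\<^sup>+\<omega>. Z' \<omega> * ennreal (exp (- (v - arrival_time A k \<omega>) * mu)) \<partial>M)"
  proof (rule nn_integral_work_survival)
    show "(\<lambda>\<omega>. v - arrival_time A k \<omega>) \<in> borel_measurable (without_work k j)"
      using borel_measurable_arrival_time_without_work by measurable
    fix \<omega> assume "\<omega> \<in> space M" "Z' \<omega> \<noteq> 0"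
    then show "0 \<le> v - arrival_time A k \<omega>"
      using arrival_time_le[of \<omega> b k] b by (auto simp: Z'_def split: if_splits)
  qed (use True Z' in auto)
  also have "\<dots> = (\<integral>\<^sup>+\<omega>. Z \<omega> * survival_weight v a b k j \<omega> \<partial>M)"
    by (intro nn_integral_cong) (auto simp: Z'_def survival_weight_def)
  finally show ?thesis .
next
  case False
  then have "present v a b k j \<omega> = 0" "survival_weight v a b k j \<omega> = 0" for \<omega>
    by (auto simp: present_def survival_weight_def)
  then show ?thesis by simp
qed

lemma nn_integral_present_eq_survival_weight:
  "0 \<le> a \<Longrightarrow> 0 \<le> b \<Longrightarrow> b \<le> v \<Longrightarrow>
     (\<integral>\<^sup>+\<omega>. present v a b k j \<omega> \<partial>M) = (\<integral>\<^sup>+\<omega>. survival_weight v a b k j \<omega> \<partial>M)"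
  using nn_integral_present[of a b v "\<lambda>_. 1" k j] by simp

lemma nn_integral_present_mult:
  assumes "0 \<le> a" "0 \<le> b" "b \<le> v" "0 \<le> a'" "0 \<le> b'" "b' \<le> v'" "(k, j) \<noteq> (k', j')"
  shows "(\<integral>\<^sup>+\<omega>. present v a b k j \<omega> * present v' a' b' k' j' \<omega> \<partial>M) =
         (\<integral>\<^sup>+\<omega>. survival_weight v a b k j \<omega> * survival_weight v' a' b' k' j' \<omega> \<partial>M)"
proof -
  have "(\<integral>\<^sup>+\<omega>. present v a b k j \<omega> * present v' a' b' k' j' \<omega> \<partial>M) =
      (\<integral>\<^sup>+\<omega>. present v a b k j \<omega> * survival_weight v' a' b' k' j' \<omega> \<partial>M)"
    using assms by (intro nn_integral_present borel_measurable_present_without_work) auto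
  also have "\<dots> = (\<integral>\<^sup>+\<omega>. survival_weight v' a' b' k' j' \<omega> * present v a b k j \<omega> \<partial>M)"
    by (simp add: mult.commute)
  also have "\<dots> = (\<integral>\<^sup>+\<omega>. survival_weight v' a' b' k' j' \<omega> * survival_weight v a b k j \<omega> \<partial>M)"
    using assms by (intro nn_integral_present borel_measurable_survival_weight_without_work) auto
  finally show ?thesis by (simp add: mult.commute)
qed

lemma queue_length_eq_present_count:
  assumes \<omega>: "\<omega> \<in> space M"
  shows "ennreal (real (queue_length A B S u \<omega>)) = present_count u 0 u \<omega>"
proof -
  have batch: "(\<Sum>j. present u 0 u k j \<omega>) = (if k \<in> {1..A u \<omega>} then
      of_nat (card {j\<in>{1..B k \<omega>}. u < arrival_time A k \<omega> + S k j \<omega>}) else 0)" for k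
  proof -
    have "(\<Sum>j. present u 0 u k j \<omega>) = (\<Sum>j\<in>{1..B k \<omega>}. present u 0 u k j \<omega>)"
      by (rule suminf_finite) (auto simp: present_def)
    also have "\<dots> = (\<Sum>j\<in>{1..B k \<omega>}. if k \<in> {1..A u \<omega>} then
        (if u < arrival_time A k \<omega> + S k j \<omega> then 1 else 0) else 0)"
      using arrivals_zero[OF \<omega>] by (intro sum.cong) (auto simp: present_def)
    also have "\<dots> = (if k \<in> {1..A u \<omega>} then
        of_nat (card {j\<in>{1..B k \<omega>}. u < arrival_time A k \<omega> + S k j \<omega>}) else 0)"
      by (simp add: sum.If_cases) (auto intro!: arg_cong[where f = card])
    finally show ?thesis .
  qed
  have "present_count u 0 u \<omega> = (\<Sum>k\<in>{1..A u \<omega>}. \<Sum>j. present u 0 u k j \<omega>)"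
    unfolding present_count_def by (rule suminf_finite) (auto simp: batch)
  also have "\<dots> = ennreal (real (queue_length A B S u \<omega>))"
    unfolding queue_length_def by (simp add: batch ennreal_of_nat_eq_real_of_nat)
  finally show ?thesis ..
qed

lemma present_count_split:
  assumes "\<omega> \<in> space M" "0 \<le> a" "a \<le> m" "m \<le> b"
  shows "present_count v a b \<omega> = present_count v a m \<omega> + present_count v m b \<omega>"
proof -
  have "A a \<omega> \<le> A m \<omega>" "A m \<omega> \<le> A b \<omega>"
    using assms arrivals_mono[OF assms(1)] by auto
  then have "present v a b k j \<omega> = present v a m k j \<omega> + present v m b k j \<omega>" for k j
    by (auto simp: present_def)
  then show ?thesis unfolding present_count_def by (simp add: suminf_add)
qed

lemma nn_integral_present_later:
  assumes "0 \<le> a" "0 \<le> b" "b \<le> v" "0 \<le> \<delta>"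
  shows "(\<integral>\<^sup>+\<omega>. present (v + \<delta>) a b k j \<omega> \<partial>M) =
    ennreal (exp (- \<delta> * mu)) * (\<integral>\<^sup>+\<omega>. present v a b k j \<omega> \<partial>M)"
proof -
  have "(\<integral>\<^sup>+\<omega>. present (v + \<delta>) a b k j \<omega> \<partial>M) = (\<integral>\<^sup>+\<omega>. survival_weight (v + \<delta>) a b k j \<omega> \<partial>M)"
    using assms by (intro nn_integral_present_eq_survival_weight) auto
  also have "\<dots> = ennreal (exp (- \<delta> * mu)) * (\<integral>\<^sup>+\<omega>. survival_weight v a b k j \<omega> \<partial>M)"
    unfolding survival_weight_shift
    by (rule nn_integral_cmult) (rule borel_measurable_survival_weight[OF assms(1,2)])
  also have "(\<integral>\<^sup>+\<omega>. survival_weight v a b k j \<omega> \<partial>M) = (\<integral>\<^sup>+\<omega>. present v a b k j \<omega> \<partial>M)"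
    using assms by (intro nn_integral_present_eq_survival_weight[symmetric])
  finally show ?thesis .
qed

lemma nn_integral_present_count_later:
  assumes "0 \<le> a" "0 \<le> b" "b \<le> v" "0 \<le> \<delta>"
  shows "(\<integral>\<^sup>+\<omega>. present_count (v + \<delta>) a b \<omega> \<partial>M) =
    ennreal (exp (- \<delta> * mu)) * (\<integral>\<^sup>+\<omega>. present_count v a b \<omega> \<partial>M)"
proof -
  have "(\<integral>\<^sup>+\<omega>. present_count (v + \<delta>) a b \<omega> \<partial>M) = (\<Sum>k. \<Sum>j. \<integral>\<^sup>+\<omega>. present (v + \<delta>) a b k j \<omega> \<partial>M)"
    unfolding present_count_def using assms by (intro nn_integral_suminf2 borel_measurable_present)
  also have "\<dots> = ennreal (exp (- \<delta> * mu)) * (\<Sum>k. \<Sum>j. \<integral>\<^sup>+\<omega>. present v a b k j \<omega> \<partial>M)"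
    by (simp only: nn_integral_present_later[OF assms] ennreal_suminf_cmult)
  also have "(\<Sum>k. \<Sum>j. \<integral>\<^sup>+\<omega>. present v a b k j \<omega> \<partial>M) = (\<integral>\<^sup>+\<omega>. present_count v a b \<omega> \<partial>M)"
    unfolding present_count_def using assms by (intro nn_integral_suminf2[symmetric] borel_measurable_present)
  finally show ?thesis .
qed

lemma nn_integral_present_mult_later:
  assumes "0 \<le> a" "0 \<le> b" "b \<le> v" "0 \<le> \<delta>"
  shows "(\<integral>\<^sup>+\<omega>. present v a b k j \<omega> * present (v + \<delta>) a b k' j' \<omega> \<partial>M) =
    ennreal (exp (- \<delta> * mu)) * (\<integral>\<^sup>+\<omega>. present v a b k j \<omega> * present v a b k' j' \<omega> \<partial>M)"
proof (cases "(k, j) = (k', j')")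
  case True
  have "(\<integral>\<^sup>+\<omega>. present v a b k j \<omega> * present (v + \<delta>) a b k' j' \<omega> \<partial>M) =
      (\<integral>\<^sup>+\<omega>. present (v + \<delta>) a b k j \<omega> \<partial>M)"
    using True assms by (intro nn_integral_cong) (auto simp: present_def)
  also have "\<dots> = ennreal (exp (- \<delta> * mu)) * (\<integral>\<^sup>+\<omega>. present v a b k j \<omega> \<partial>M)"
    by (rule nn_integral_present_later[OF assms])
  also have "(\<integral>\<^sup>+\<omega>. present v a b k j \<omega> \<partial>M) = (\<integral>\<^sup>+\<omega>. present v a b k j \<omega> * present v a b k' j' \<omega> \<partial>M)"
    using True by (intro nn_integral_cong) (auto simp: present_def)
  finally show ?thesis .
next
  case False
  have "(\<integral>\<^sup>+\<omega>. present v a b k j \<omega> * present (v + \<delta>) a b k' j' \<omega> \<partial>M) =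
      (\<integral>\<^sup>+\<omega>. survival_weight v a b k j \<omega> * survival_weight (v + \<delta>) a b k' j' \<omega> \<partial>M)"
    using assms False by (intro nn_integral_present_mult) auto
  also have "\<dots> = (\<integral>\<^sup>+\<omega>. ennreal (exp (- \<delta> * mu)) * (survival_weight v a b k j \<omega> * survival_weight v a b k' j' \<omega>) \<partial>M)"
    by (simp only: survival_weight_shift mult.left_commute)
  also have "\<dots> = ennreal (exp (- \<delta> * mu)) * (\<integral>\<^sup>+\<omega>. survival_weight v a b k j \<omega> * survival_weight v a b k' j' \<omega> \<partial>M)"
    using borel_measurable_survival_weight[OF assms(1,2)] by (intro nn_integral_cmult) measurable
  also have "(\<integral>\<^sup>+\<omega>. survival_weight v a b k j \<omega> * survival_weight v a b k' j' \<omega> \<partial>M) =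
      (\<integral>\<^sup>+\<omega>. present v a b k j \<omega> * present v a b k' j' \<omega> \<partial>M)"
    using assms False by (intro nn_integral_present_mult[symmetric]) auto
  finally show ?thesis .
qed

lemma nn_integral_present_count_mult_later:
  assumes "0 \<le> a" "0 \<le> b" "b \<le> v" "0 \<le> \<delta>"
  shows "(\<integral>\<^sup>+\<omega>. present_count v a b \<omega> * present_count (v + \<delta>) a b \<omega> \<partial>M) =
    ennreal (exp (- \<delta> * mu)) * (\<integral>\<^sup>+\<omega>. present_count v a b \<omega> * present_count v a b \<omega> \<partial>M)"
proof -
  have "(\<integral>\<^sup>+\<omega>. present_count v a b \<omega> * present_count (v + \<delta>) a b \<omega> \<partial>M) =
      (\<Sum>k. \<Sum>k'. \<Sum>j. \<Sum>j'. \<integral>\<^sup>+\<omega>. present v a b k j \<omega> * present (v + \<delta>) a b k' j' \<omega> \<partial>M)"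
    unfolding present_count_def using assms
    by (intro nn_integral_suminf2_mult_suminf2 borel_measurable_present) auto
  also have "\<dots> = ennreal (exp (- \<delta> * mu)) *
      (\<Sum>k. \<Sum>k'. \<Sum>j. \<Sum>j'. \<integral>\<^sup>+\<omega>. present v a b k j \<omega> * present v a b k' j' \<omega> \<partial>M)"
    by (simp only: nn_integral_present_mult_later[OF assms] ennreal_suminf_cmult)
  also have "\<dots> = ennreal (exp (- \<delta> * mu)) * (\<integral>\<^sup>+\<omega>. present_count v a b \<omega> * present_count v a b \<omega> \<partial>M)"
    unfolding present_count_def using assms
    by (intro nn_integral_suminf2_mult_suminf2[symmetric] arg_cong2[where f = "(*)"] refl
        borel_measurable_present)
  finally show ?thesis .
qed

section \<open>Integrating out the batch sizes\<close>

definition batch_pattern :: "nat set \<Rightarrow> (nat \<Rightarrow> nat) \<Rightarrow> 'a set" where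
  "batch_pattern K b = {\<omega> \<in> space M. \<forall>k\<in>K. B k \<omega> = b k}"

definition pattern_likelihood :: "nat set \<Rightarrow> (nat \<Rightarrow> nat) \<Rightarrow> 'a \<Rightarrow> ennreal" where
  "pattern_likelihood K b \<omega> = (\<Prod>k\<in>K. ennreal (pmf (beta (arrival_time A k \<omega>)) (b k)))"

lemma batch_pattern_in_sets:
  assumes "K \<subseteq> {1..n}"
  shows "batch_pattern K b \<in> sets M"
  unfolding batch_pattern_def
proof (rule sets.sets_Collect_finite_All)
  fix k assume "k \<in> K"
  then have "1 \<le> k" using assms by auto
  note [measurable] = measurable_batch[OF this]
  show "{\<omega> \<in> space M. B k \<omega> = b k} \<in> sets M" by measurable
qed (rule finite_subset[OF assms finite_atLeastAtMost])

lemma borel_measurable_pmf_arrival_time: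
  "(\<lambda>\<omega>. pmf (beta (arrival_time A k \<omega>)) v) \<in> borel_measurable arrival_sigma"
  using measurable_compose[OF borel_measurable_arrival_time borel_measurable_pmf_beta] by simp

lemma borel_measurable_pattern_likelihood: "pattern_likelihood K b \<in> borel_measurable arrival_sigma"
  unfolding pattern_likelihood_def using borel_measurable_pmf_arrival_time by measurable

lemma borel_measurable_nn_integral_beta:
  "(\<lambda>s. \<integral>\<^sup>+v. f v \<partial>measure_pmf (beta s)) \<in> borel_measurable borel"
  unfolding nn_integral_measure_pmf_nat using borel_measurable_pmf_beta by measurable

lemma emeasure_batch_pattern:
  assumes E: "E \<in> sets arrival_sigma" "E \<subseteq> arrived n"
  shows "emeasure M (E \<inter> batch_pattern {1..n} b) = (\<integral>\<^sup>+\<omega>. indicator E \<omega> * pattern_likelihood {1..n} b \<omega> \<partial>M)"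
proof -
  define g where "g \<omega> = (\<Prod>k\<in>{1..n}. pmf (beta (arrival_time A k \<omega>)) (b k))" for \<omega>
  have E_M: "E \<in> sets M" using E subalgebra_arrival_sigma by (auto simp: subalgebra_def)
  have g: "g \<in> borel_measurable M"
    unfolding g_def using measurable_from_subalg[OF subalgebra_arrival_sigma borel_measurable_pmf_arrival_time]
    by measurable
  have "measure M (E \<inter> batch_pattern {1..n} b) = (LINT \<omega>:E|M. g \<omega>)"
    using model E unfolding batch_model_def sets_arrival_sigma arrived_def g_def batch_pattern_def by blast
  moreover have "integrable M (\<lambda>\<omega>. indicator E \<omega> *\<^sub>R g \<omega>)"
  proof (rule integrable_const_bound[where B = 1])
    show "AE \<omega> in M. norm (indicator E \<omega> *\<^sub>R g \<omega>) \<le> 1"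
      by (auto simp: g_def indicator_def abs_prod intro!: prod_le_1 pmf_le_1)
  qed (use g E_M in measurable)
  ultimately have "emeasure M (E \<inter> batch_pattern {1..n} b) = (\<integral>\<^sup>+\<omega>. ennreal (indicator E \<omega> *\<^sub>R g \<omega>) \<partial>M)"
    using batch_pattern_in_sets[of "{1..n}" n b] E_M unfolding set_lebesgue_integral_def
    by (subst nn_integral_eq_integral) (auto simp: emeasure_eq_measure g_def indicator_def intro!: prod_nonneg)
  also have "\<dots> = (\<integral>\<^sup>+\<omega>. indicator E \<omega> * pattern_likelihood {1..n} b \<omega> \<partial>M)"
    by (rule nn_integral_cong) (auto simp: g_def pattern_likelihood_def indicator_def prod_ennreal)
  finally show ?thesis .
qed

lemma nn_integral_batch_pattern:
  assumes h: "h \<in> borel_measurable arrival_sigma"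
    and supp: "\<And>\<omega>. \<omega> \<in> space M \<Longrightarrow> h \<omega> \<noteq> 0 \<Longrightarrow> \<omega> \<in> arrived n"
  shows "(\<integral>\<^sup>+\<omega>. h \<omega> * indicator (batch_pattern {1..n} b) \<omega> \<partial>M) =
    (\<integral>\<^sup>+\<omega>. h \<omega> * pattern_likelihood {1..n} b \<omega> \<partial>M)"
proof -
  let ?R = "arrived n" and ?F = "batch_pattern {1..n} b"
  define g1 :: "'a \<Rightarrow> ennreal" where "g1 = indicator (?R \<inter> ?F)"
  define g2 where "g2 \<omega> = indicator ?R \<omega> * pattern_likelihood {1..n} b \<omega>" for \<omega>
  have R: "?R \<in> sets M"
    using arrived_in_arrival_sigma subalgebra_arrival_sigma by (auto simp: subalgebra_def)
  have g1: "g1 \<in> borel_measurable M"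
    unfolding g1_def using R batch_pattern_in_sets[of "{1..n}" n b] by measurable
  have g2: "g2 \<in> borel_measurable M"
    unfolding g2_def using R measurable_from_subalg[OF subalgebra_arrival_sigma borel_measurable_pattern_likelihood]
    by measurable
  have h_M: "h \<in> borel_measurable M" by (rule measurable_from_subalg[OF subalgebra_arrival_sigma h])
  have id: "(\<lambda>x. x) \<in> measurable (density M g) arrival_sigma" for g
    using subalgebra_arrival_sigma by (auto simp: measurable_def subalgebra_def)
  \<comment> \<open>the two densities agree on the arrival events, by the conditional law of the batch sizes\<close>
  have restrictions: "distr (density M g1) arrival_sigma (\<lambda>x. x) = distr (density M g2) arrival_sigma (\<lambda>x. x)"
  proof (rule measure_eqI)
    fix E assume "E \<in> sets (distr (density M g1) arrival_sigma (\<lambda>x. x))"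
    then have E: "E \<in> sets arrival_sigma" by simp
    then have E_M: "E \<in> sets M" and E_space: "E \<subseteq> space M"
      using subalgebra_arrival_sigma sets.sets_into_space by (auto simp: subalgebra_def)
    have ER: "E \<inter> ?R \<in> sets arrival_sigma" using E arrived_in_arrival_sigma by auto
    have "emeasure (distr (density M g1) arrival_sigma (\<lambda>x. x)) E = (\<integral>\<^sup>+\<omega>. g1 \<omega> * indicator E \<omega> \<partial>M)"
      using E E_M E_space by (simp add: emeasure_distr[OF id E] emeasure_density[OF g1] Int_absorb2)
    also have "\<dots> = (\<integral>\<^sup>+\<omega>. indicator ((E \<inter> ?R) \<inter> ?F) \<omega> \<partial>M)"
      by (rule nn_integral_cong) (auto simp: g1_def indicator_def)
    also have "\<dots> = emeasure M ((E \<inter> ?R) \<inter> ?F)"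
      using E_M R batch_pattern_in_sets[of "{1..n}" n b] by (intro nn_integral_indicator) auto
    also have "\<dots> = (\<integral>\<^sup>+\<omega>. indicator (E \<inter> ?R) \<omega> * pattern_likelihood {1..n} b \<omega> \<partial>M)"
      by (rule emeasure_batch_pattern[OF ER]) auto
    also have "\<dots> = (\<integral>\<^sup>+\<omega>. g2 \<omega> * indicator E \<omega> \<partial>M)"
      by (rule nn_integral_cong) (auto simp: g2_def indicator_def)
    also have "\<dots> = emeasure (distr (density M g2) arrival_sigma (\<lambda>x. x)) E"
      using E E_M E_space by (simp add: emeasure_distr[OF id E] emeasure_density[OF g2] Int_absorb2)
    finally show "emeasure (distr (density M g1) arrival_sigma (\<lambda>x. x)) E =
      emeasure (distr (density M g2) arrival_sigma (\<lambda>x. x)) E" .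
  qed simp
  have h_distr: "h \<in> borel_measurable (distr (density M g) arrival_sigma (\<lambda>x. x))" for g
    using h by simp
  have "(\<integral>\<^sup>+\<omega>. h \<omega> * indicator ?F \<omega> \<partial>M) = (\<integral>\<^sup>+\<omega>. g1 \<omega> * h \<omega> \<partial>M)"
    using supp by (intro nn_integral_cong) (auto simp: g1_def indicator_def)
  also have "\<dots> = integral\<^sup>N (distr (density M g1) arrival_sigma (\<lambda>x. x)) h"
    by (simp add: nn_integral_distr[OF id h_distr] nn_integral_density[OF g1 h_M])
  also have "\<dots> = (\<integral>\<^sup>+\<omega>. g2 \<omega> * h \<omega> \<partial>M)"
    by (simp add: restrictions nn_integral_distr[OF id h_distr] nn_integral_density[OF g2 h_M])
  also have "\<dots> = (\<integral>\<^sup>+\<omega>. h \<omega> * pattern_likelihood {1..n} b \<omega> \<partial>M)"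
    using supp by (intro nn_integral_cong) (auto simp: g2_def indicator_def mult.commute)
  finally show ?thesis .
qed

lemma borel_measurable_prod_batch:
  fixes f :: "nat \<Rightarrow> nat \<Rightarrow> ennreal"
  assumes "K \<subseteq> {1..n}"
  shows "(\<lambda>\<omega>. \<Prod>k\<in>K. f k (B k \<omega>)) \<in> borel_measurable M"
proof (rule borel_measurable_prod_ennreal)
  fix k assume "k \<in> K"
  then have "1 \<le> k" using assms by auto
  then show "(\<lambda>\<omega>. f k (B k \<omega>)) \<in> borel_measurable M"
    using measurable_batch by measurable
qed

lemma borel_measurable_nn_integral_beta_arrival_time:
  "(\<lambda>\<omega>. \<integral>\<^sup>+v. f v \<partial>measure_pmf (beta (arrival_time A k \<omega>))) \<in> borel_measurable M"
  using measurable_compose[OF borel_measurable_arrival_time_M borel_measurable_nn_integral_beta] by simp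

lemma indicator_batch_pattern_mult:
  fixes f :: "nat \<Rightarrow> ennreal"
  assumes "\<omega> \<in> space M" "x \<notin> L"
  shows "indicator (batch_pattern L b) \<omega> * f (B x \<omega>) =
    (\<Sum>v. f v * indicator (batch_pattern (insert x L) (b(x := v))) \<omega>)"
proof -
  have pattern: "\<omega> \<in> batch_pattern (insert x L) (b(x := v)) \<longleftrightarrow> B x \<omega> = v \<and> \<omega> \<in> batch_pattern L b" for v
    using assms by (auto simp: batch_pattern_def)
  have "(\<Sum>v. f v * indicator (batch_pattern (insert x L) (b(x := v))) \<omega>) =
      (\<Sum>v\<in>{B x \<omega>}. f v * indicator (batch_pattern (insert x L) (b(x := v))) \<omega>)"
    by (rule suminf_finite) (auto simp: pattern indicator_def)
  then show ?thesis by (simp add: pattern indicator_def mult.commute)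
qed

lemma pattern_likelihood_insert:
  assumes "finite L" "x \<notin> L"
  shows "pattern_likelihood (insert x L) (b(x := v)) \<omega> =
    ennreal (pmf (beta (arrival_time A x \<omega>)) v) * pattern_likelihood L b \<omega>"
proof -
  have "(\<Prod>k\<in>L. ennreal (pmf (beta (arrival_time A k \<omega>)) ((b(x := v)) k))) =
      (\<Prod>k\<in>L. ennreal (pmf (beta (arrival_time A k \<omega>)) (b k)))"
    using assms(2) by (intro prod.cong) auto
  then show ?thesis using assms unfolding pattern_likelihood_def by simp
qed

text \<open>Induction on the batches \<open>K\<close> whose sizes have been integrated out; the sizes of the remaining
  batches are fixed to the pattern \<open>b\<close>.\<close>

lemma nn_integral_batch_sizes_partial:
  assumes h: "h \<in> borel_measurable arrival_sigma"
    and supp: "\<And>\<omega>. \<omega> \<in> space M \<Longrightarrow> h \<omega> \<noteq> 0 \<Longrightarrow> \<omega> \<in> arrived n"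
    and K: "K \<subseteq> {1..n}"
  shows "(\<integral>\<^sup>+\<omega>. h \<omega> * indicator (batch_pattern ({1..n} - K) b) \<omega> * (\<Prod>k\<in>K. f k (B k \<omega>)) \<partial>M) =
    (\<integral>\<^sup>+\<omega>. h \<omega> * pattern_likelihood ({1..n} - K) b \<omega> *
       (\<Prod>k\<in>K. \<integral>\<^sup>+v. f k v \<partial>measure_pmf (beta (arrival_time A k \<omega>))) \<partial>M)"
  using finite_subset[OF K finite_atLeastAtMost] K
proof (induction K arbitrary: b rule: finite_induct)
  case empty
  then show ?case using nn_integral_batch_pattern[OF h supp] by simp
next
  case (insert x K)
  let ?L = "{1..n} - insert x K"
  let ?E = "\<lambda>k \<omega>. \<integral>\<^sup>+v. f k v \<partial>measure_pmf (beta (arrival_time A k \<omega>))"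
  let ?F = "\<lambda>\<omega>. \<Prod>k\<in>K. f k (B k \<omega>)"
  let ?pmf = "\<lambda>v \<omega>. ennreal (pmf (beta (arrival_time A x \<omega>)) v)"
  let ?G = "\<lambda>\<omega>. h \<omega> * pattern_likelihood ?L b \<omega> * (\<Prod>k\<in>K. ?E k \<omega>)"
  have K: "K \<subseteq> {1..n}" and x: "x \<notin> ?L" and L: "insert x ?L \<subseteq> {1..n}"
    using insert by auto
  have L_eq: "{1..n} - K = insert x ?L" using insert by auto
  have h_M: "h \<in> borel_measurable M" by (rule measurable_from_subalg[OF subalgebra_arrival_sigma h])
  have F: "?F \<in> borel_measurable M" by (rule borel_measurable_prod_batch[OF K])
  have pattern: "batch_pattern (insert x ?L) b' \<in> sets M" for b' by (rule batch_pattern_in_sets[OF L])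
  have likelihood: "pattern_likelihood ?L b \<in> borel_measurable M"
    by (rule measurable_from_subalg[OF subalgebra_arrival_sigma borel_measurable_pattern_likelihood])
  have E: "(\<lambda>\<omega>. \<Prod>k\<in>K. ?E k \<omega>) \<in> borel_measurable M"
    by (intro borel_measurable_prod_ennreal borel_measurable_nn_integral_beta_arrival_time)
  have pmf_x: "?pmf v \<in> borel_measurable M" for v
    by (intro measurable_compose[OF _ measurable_ennreal]
        measurable_from_subalg[OF subalgebra_arrival_sigma borel_measurable_pmf_arrival_time])
  note measurable_parts = h_M F pattern likelihood E pmf_x
  have "(\<integral>\<^sup>+\<omega>. h \<omega> * indicator (batch_pattern ?L b) \<omega> * (\<Prod>k\<in>insert x K. f k (B k \<omega>)) \<partial>M) =
      (\<integral>\<^sup>+\<omega>. (\<Sum>v. f x v * (h \<omega> * indicator (batch_pattern (insert x ?L) (b(x := v))) \<omega> * ?F \<omega>)) \<partial>M)"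
  proof (rule nn_integral_cong)
    fix \<omega> assume \<omega>: "\<omega> \<in> space M"
    have "h \<omega> * indicator (batch_pattern ?L b) \<omega> * (\<Prod>k\<in>insert x K. f k (B k \<omega>)) =
        (indicator (batch_pattern ?L b) \<omega> * f x (B x \<omega>)) * (h \<omega> * ?F \<omega>)"
      using insert.hyps by (simp add: mult_ac)
    also have "\<dots> = (\<Sum>v. f x v * indicator (batch_pattern (insert x ?L) (b(x := v))) \<omega>) * (h \<omega> * ?F \<omega>)"
      by (simp only: indicator_batch_pattern_mult[OF \<omega> x])
    finally show "h \<omega> * indicator (batch_pattern ?L b) \<omega> * (\<Prod>k\<in>insert x K. f k (B k \<omega>)) =
        (\<Sum>v. f x v * (h \<omega> * indicator (batch_pattern (insert x ?L) (b(x := v))) \<omega> * ?F \<omega>))"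
      by (subst (asm) ennreal_suminf_multc[symmetric]) (simp only: mult_ac)
  qed
  also have "\<dots> = (\<Sum>v. f x v * (\<integral>\<^sup>+\<omega>. h \<omega> * indicator (batch_pattern (insert x ?L) (b(x := v))) \<omega> * ?F \<omega> \<partial>M))"
    by (rule nn_integral_suminf_cmult) (use measurable_parts in measurable)
  also have "\<dots> = (\<Sum>v. f x v * (\<integral>\<^sup>+\<omega>. h \<omega> * pattern_likelihood (insert x ?L) (b(x := v)) \<omega> * (\<Prod>k\<in>K. ?E k \<omega>) \<partial>M))"
    using insert.IH[OF K] by (simp only: L_eq)
  also have "\<dots> = (\<Sum>v. f x v * (\<integral>\<^sup>+\<omega>. ?pmf v \<omega> * ?G \<omega> \<partial>M))"
    by (simp only: pattern_likelihood_insert[OF finite_Diff[OF finite_atLeastAtMost] x] mult_ac)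
  also have "\<dots> = (\<integral>\<^sup>+\<omega>. (\<Sum>v. f x v * (?pmf v \<omega> * ?G \<omega>)) \<partial>M)"
    by (rule nn_integral_suminf_cmult[symmetric]) (use measurable_parts in measurable)
  also have "\<dots> = (\<integral>\<^sup>+\<omega>. ?E x \<omega> * ?G \<omega> \<partial>M)"
  proof (rule nn_integral_cong)
    fix \<omega>
    have "(\<Sum>v. f x v * (?pmf v \<omega> * ?G \<omega>)) = (\<Sum>v. (?pmf v \<omega> * f x v) * ?G \<omega>)"
      by (simp only: mult_ac)
    then show "(\<Sum>v. f x v * (?pmf v \<omega> * ?G \<omega>)) = ?E x \<omega> * ?G \<omega>"
      by (simp only: ennreal_suminf_multc nn_integral_measure_pmf_nat)
  qed
  also have "\<dots> = (\<integral>\<^sup>+\<omega>. h \<omega> * pattern_likelihood ?L b \<omega> * (\<Prod>k\<in>insert x K. ?E k \<omega>) \<partial>M)"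
    using insert.hyps by (simp add: mult_ac)
  finally show ?case .
qed

definition mean_batch :: "real \<Rightarrow> ennreal" where
  "mean_batch s = (\<integral>\<^sup>+v. of_nat v \<partial>measure_pmf (beta s))"

lemma borel_measurable_mean_batch: "mean_batch \<in> borel_measurable borel"
  unfolding mean_batch_def by (rule borel_measurable_nn_integral_beta)

lemma nn_integral_prod_batch_sizes:
  assumes h: "h \<in> borel_measurable arrival_sigma"
    and supp: "\<And>\<omega>. \<omega> \<in> space M \<Longrightarrow> h \<omega> \<noteq> 0 \<Longrightarrow> \<omega> \<in> arrived n"
    and K: "K \<subseteq> {1..n}"
  shows "(\<integral>\<^sup>+\<omega>. h \<omega> * (\<Prod>k\<in>K. of_nat (B k \<omega>)) \<partial>M) =
    (\<integral>\<^sup>+\<omega>. h \<omega> * (\<Prod>k\<in>K. mean_batch (arrival_time A k \<omega>)) \<partial>M)"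
proof -
  define f :: "nat \<Rightarrow> nat \<Rightarrow> ennreal" where "f k v = (if k \<in> K then of_nat v else 1)" for k v
  have K_eq: "{1..n} \<inter> K = K" using K by auto
  have "(\<Prod>k\<in>{1..n}. f k (B k \<omega>)) = (\<Prod>k\<in>K. of_nat (B k \<omega>))" for \<omega>
    unfolding f_def prod.inter_restrict[OF finite_atLeastAtMost, symmetric] K_eq ..
  moreover have "(\<Prod>k\<in>{1..n}. \<integral>\<^sup>+v. f k v \<partial>measure_pmf (beta (arrival_time A k \<omega>))) =
      (\<Prod>k\<in>K. mean_batch (arrival_time A k \<omega>))" for \<omega>
  proof -
    have "(\<integral>\<^sup>+v. f k v \<partial>measure_pmf (beta (arrival_time A k \<omega>))) =
        (if k \<in> K then mean_batch (arrival_time A k \<omega>) else 1)" for k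
      by (simp add: f_def mean_batch_def measure_pmf.emeasure_space_1)
    then show ?thesis
      by (simp only: prod.inter_restrict[OF finite_atLeastAtMost, symmetric] K_eq)
  qed
  moreover have "batch_pattern {} b = space M" "pattern_likelihood {} b \<omega> = 1" for b \<omega>
    by (simp_all add: batch_pattern_def pattern_likelihood_def)
  ultimately show ?thesis
    using nn_integral_batch_sizes_partial[OF h supp order_refl, of undefined f]
    by (simp cong: nn_integral_cong)
qed

section \<open>Independent increments of the arrival process\<close>

lemma dyadic_approx:
  assumes \<omega>: "\<omega> \<in> space M" and a: "0 \<le> a" and L: "0 < L" and y: "a \<le> y" "y < a + L"
  shows "k \<le> A y \<omega> \<longleftrightarrow> (\<forall>N. k \<le> A (a + L * real (dyadic_index a L y N) / 2^N) \<omega>)"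
proof -
  have y0: "0 \<le> y" using a y by simp
  show ?thesis
  proof
    assume "k \<le> A y \<omega>"
    then show "\<forall>N. k \<le> A (a + L * real (dyadic_index a L y N) / 2^N) \<omega>"
      using arrivals_mono[OF \<omega> y0 dyadic_point_ge[OF L]] order_trans by blast
  next
    assume above: "\<forall>N. k \<le> A (a + L * real (dyadic_index a L y N) / 2^N) \<omega>"
    obtain b where "y < b" and const: "\<And>s. y < s \<Longrightarrow> s < b \<Longrightarrow> A s \<omega> = A y \<omega>"
      using right_continuous_nat_locally_constant[OF arrivals_right_continuous[OF \<omega> y0]] by blast
    obtain N where "L / (b - y) < 2^N" using real_arch_pow[of 2 "L / (b - y)"] by auto
    then have "L / 2^N < b - y" using \<open>y < b\<close> by (simp add: field_simps)
    define g where "g = a + L * real (dyadic_index a L y N) / 2^N"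
    have "y \<le> g" "g < b"
      using dyadic_point_ge[OF L] dyadic_point_less[OF L y(1), of N] \<open>L / 2^N < b - y\<close>
      unfolding g_def by auto
    then have "A g \<omega> = A y \<omega>" using const by (cases "g = y") auto
    then show "k \<le> A y \<omega>" using above[rule_format, of N] by (simp add: g_def)
  qed
qed

definition increment_events :: "real \<Rightarrow> real \<Rightarrow> nat \<Rightarrow> 'a set set" where
  "increment_events a b N =
     {(\<lambda>\<omega>. A (a + (b - a) * real i / 2^N) \<omega> - A a \<omega>) -` {m} \<inter> space M | i m. i \<le> 2^N}"

text \<open>The \<open>\<sigma>\<close>-algebras generated by the increments on the dyadic grids of \<open>[a, b]\<close> increase
  with the mesh, so their union is an \<open>\<inter>\<close>-stable generator.\<close>

definition increments :: "real \<Rightarrow> real \<Rightarrow> 'a measure" where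
  "increments a b = sigma (space M) (\<Union>N. sigma_sets (space M) (increment_events a b N))"

lemma increment_events_subset: "increment_events a b N \<subseteq> Pow (space M)"
  by (auto simp: increment_events_def)

lemma sigma_sets_increment_events_subset:
  "(\<Union>N. sigma_sets (space M) (increment_events a b N)) \<subseteq> Pow (space M)"
  using sigma_sets_into_sp[OF increment_events_subset] by blast

lemma increment_events_mono: "N \<le> N' \<Longrightarrow> sigma_sets (space M) (increment_events a b N) \<subseteq>
    sigma_sets (space M) (increment_events a b N')"
proof (induction N' rule: dec_induct)
  case (step N')
  have "increment_events a b N' \<subseteq> increment_events a b (Suc N')"
  proof
    fix E assume "E \<in> increment_events a b N'"
    then obtain i m where i: "i \<le> 2^N'"
      and E: "E = (\<lambda>\<omega>. A (a + (b - a) * real i / 2^N') \<omega> - A a \<omega>) -` {m} \<inter> space M"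
      by (auto simp: increment_events_def)
    have "(b - a) * real i / 2^N' = (b - a) * real (2 * i) / 2^Suc N'" by simp
    then have "E = (\<lambda>\<omega>. A (a + (b - a) * real (2 * i) / 2^Suc N') \<omega> - A a \<omega>) -` {m} \<inter> space M"
      unfolding E by (simp only:)
    then show "E \<in> increment_events a b (Suc N')"
      unfolding increment_events_def using i by (intro CollectI exI[of _ "2 * i"] exI[of _ m] conjI) simp_all
  qed
  then show ?case by (rule order_trans[OF step.IH sigma_sets_mono'])
qed simp

lemma Int_stable_increment_events: "Int_stable (\<Union>N. sigma_sets (space M) (increment_events a b N))"
  unfolding Int_stable_def
proof clarify
  fix E E' N N'
  assume "E \<in> sigma_sets (space M) (increment_events a b N)" "E' \<in> sigma_sets (space M) (increment_events a b N')"
  then have "E \<in> sigma_sets (space M) (increment_events a b (max N N'))"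
    "E' \<in> sigma_sets (space M) (increment_events a b (max N N'))"
    by (auto intro: subsetD[OF increment_events_mono[of N "max N N'" a b]]
        subsetD[OF increment_events_mono[of N' "max N N'" a b]])
  then show "E \<inter> E' \<in> (\<Union>N. sigma_sets (space M) (increment_events a b N))"
    using sets.Int[of E "sigma (space M) (increment_events a b (max N N'))" E'] increment_events_subset by auto
qed

lemma space_increments [simp]: "space (increments a b) = space M"
  by (simp add: increments_def space_measure_of_conv)

lemma sets_increments:
  "sets (increments a b) = sigma_sets (space M) (\<Union>N. sigma_sets (space M) (increment_events a b N))"
  unfolding increments_def using sigma_sets_increment_events_subset by (subst sets_measure_of) auto

lemma increment_events_in_sets:
  assumes "0 \<le> a" "a \<le> b"
  shows "increment_events a b N \<subseteq> sets M"
proof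
  fix E assume "E \<in> increment_events a b N"
  then obtain i m where E: "E = (\<lambda>\<omega>. A (a + (b - a) * real i / 2^N) \<omega> - A a \<omega>) -` {m} \<inter> space M"
    by (auto simp: increment_events_def)
  have "0 \<le> a + (b - a) * real i / 2^N" using assms by simp
  note [measurable] = measurable_arrivals[OF this] measurable_arrivals[OF assms(1)]
  have "{\<omega> \<in> space M. A (a + (b - a) * real i / 2^N) \<omega> - A a \<omega> = m} \<in> sets M" by measurable
  then show "E \<in> sets M" unfolding E by (simp add: vimage_def Int_def conj_commute)
qed

lemma subalgebra_increments:
  assumes "0 \<le> a" "a \<le> b"
  shows "subalgebra M (increments a b)"
proof -
  have "sigma_sets (space M) (increment_events a b N) \<subseteq> sets M" for N
    using increment_events_in_sets[OF assms] by (rule sets.sigma_sets_subset)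
  then show ?thesis unfolding subalgebra_def sets_increments
    by (auto intro!: sets.sigma_sets_subset)
qed

lemma measurable_dyadic_increment:
  assumes "i \<le> 2^N"
  shows "(\<lambda>\<omega>. A (a + (b - a) * real i / 2^N) \<omega> - A a \<omega>) \<in> measurable (increments a b) (count_space UNIV)"
proof -
  have "(\<lambda>\<omega>. A (a + (b - a) * real i / 2^N) \<omega> - A a \<omega>) -` {m} \<inter> space M \<in> sets (increments a b)" for m
    unfolding sets_increments using assms
    by (intro sigma_sets.Basic UN_I[of N] sigma_sets.Basic) (auto simp: increment_events_def)
  then show ?thesis by (simp add: measurable_count_space_eq2_countable)
qed

lemma increments_telescope:
  assumes \<omega>: "\<omega> \<in> space M" and tt: "0 \<le> tt 0" "mono tt" and "p \<le> q"
  shows "real (A (tt q) \<omega> - A (tt p) \<omega>) = (\<Sum>l\<in>{p..<q}. real (A (tt (Suc l)) \<omega> - A (tt l) \<omega>))"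
  using \<open>p \<le> q\<close>
proof (induction q rule: dec_induct)
  case (step q)
  have "0 \<le> tt p" "tt p \<le> tt q" "tt q \<le> tt (Suc q)"
    using tt step.hyps by (auto intro: order_trans[OF _ monoD] monoD)
  then have "A (tt p) \<omega> \<le> A (tt q) \<omega>" "A (tt q) \<omega> \<le> A (tt (Suc q)) \<omega>"
    using arrivals_mono[OF \<omega>] by (auto intro: order_trans)
  then show ?case using step.IH step.hyps by (simp add: of_nat_diff)
qed simp

lemma indep_increment_events:
  assumes ab: "0 \<le> a" "a \<le> b" and bc: "b \<le> c"
  shows "indep_set (sigma_sets (space M) (increment_events a b N)) (sigma_sets (space M) (increment_events b c N))"
proof -
  define n :: nat where "n = 2^N"
  have "0 < n" by (simp add: n_def)
  define tt where "tt j = (if j \<le> n then a + (b - a) * real j / n else b + (c - b) * real (min (j - n) n) / n)" for j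
  have tt_mono: "mono tt"
  proof (rule incseq_SucI)
    fix j :: nat
    consider "Suc j \<le> n" | "j = n" | "n < j" by linarith
    then show "tt j \<le> tt (Suc j)"
      using ab bc \<open>0 < n\<close> by cases (auto simp: tt_def divide_right_mono mult_left_mono)
  qed
  have tt0: "0 \<le> tt 0" using ab by (simp add: tt_def)
  define D where "D l \<omega> = A (tt (Suc l)) \<omega> - A (tt l) \<omega>" for l \<omega>
  define E where "E l = {D l -` X \<inter> space M | X. X \<in> sets (count_space (UNIV :: nat set))}" for l
  have "indep_sets E {..<2 * n}"
    using indep_increments[OF tt0 tt_mono, of "2 * n"] unfolding indep_vars_def2 E_def D_def by blast
  then have "indep_set (sigma_sets (space M) (\<Union>l\<in>{..<n}. E l))
      (sigma_sets (space M) (\<Union>l\<in>{..<2 * n} - {..<n}. E l))"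
    by (rule indep_set_sigma_sets_partition) (auto simp only: E_def Int_stable_vimage_sets)
  moreover have "{..<2 * n} - {..<n} = {n..<2 * n}" by auto
  ultimately have indep: "indep_set (sigma_sets (space M) (\<Union>l\<in>{..<n}. E l))
      (sigma_sets (space M) (\<Union>l\<in>{n..<2 * n}. E l))"
    by simp
  have dyadic: "(\<lambda>\<omega>. A (a' + (b' - a') * real i / 2^N) \<omega> - A a' \<omega>) -` {m} \<inter> space M =
      {\<omega> \<in> space M. (\<Sum>l\<in>{p..<p + i}. real (D l \<omega>)) = real m}"
    if "i \<le> n" "tt p = a'" "\<And>i'. i' \<le> n \<Longrightarrow> tt (p + i') = a' + (b' - a') * real i' / 2^N" for a' b' i m p
    using that increments_telescope[OF _ tt0 tt_mono, of _ p "p + i"]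
    unfolding D_def by (auto simp flip: of_nat_sum)
  have past: "increment_events a b N \<subseteq> sigma_sets (space M) (\<Union>l\<in>{..<n}. E l)"
  proof
    fix F assume "F \<in> increment_events a b N"
    then obtain i m where i: "i \<le> n" and F: "F = (\<lambda>\<omega>. A (a + (b - a) * real i / 2^N) \<omega> - A a \<omega>) -` {m} \<inter> space M"
      by (auto simp: increment_events_def n_def)
    have "F = {\<omega> \<in> space M. (\<Sum>l\<in>{0..<0 + i}. real (D l \<omega>)) = real m}"
      unfolding F using i by (intro dyadic) (auto simp: tt_def n_def)
    then show "F \<in> sigma_sets (space M) (\<Union>l\<in>{..<n}. E l)"
      using sigma_sets_sum_level_set[of "{0..<0 + i}" "{..<n}" "space M" D "real m"] i
      by (simp add: E_def subset_eq)
  qed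
  have future: "increment_events b c N \<subseteq> sigma_sets (space M) (\<Union>l\<in>{n..<2 * n}. E l)"
  proof
    fix F assume "F \<in> increment_events b c N"
    then obtain i m where i: "i \<le> n" and F: "F = (\<lambda>\<omega>. A (b + (c - b) * real i / 2^N) \<omega> - A b \<omega>) -` {m} \<inter> space M"
      by (auto simp: increment_events_def n_def)
    have "tt (n + i') = b + (c - b) * real i' / 2^N" if "i' \<le> n" for i'
      using that \<open>0 < n\<close> by (cases "i' = 0") (auto simp: tt_def n_def)
    then have "F = {\<omega> \<in> space M. (\<Sum>l\<in>{n..<n + i}. real (D l \<omega>)) = real m}"
      unfolding F using i by (intro dyadic) (auto simp: tt_def)
    then show "F \<in> sigma_sets (space M) (\<Union>l\<in>{n..<2 * n}. E l)"
      using sigma_sets_sum_level_set[of "{n..<n + i}" "{n..<2 * n}" "space M" D "real m"] i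
      by (simp add: E_def subset_eq)
  qed
  show ?thesis
    using indep unfolding indep_set_def
    by (rule indep_sets_mono_sets) (use sigma_sets_mono[OF past] sigma_sets_mono[OF future] in \<open>auto split: bool.split\<close>)
qed

lemma indep_set_increments:
  assumes "0 \<le> a" "a \<le> b" "b \<le> c"
  shows "indep_set (sets (increments a b)) (sets (increments b c))"
proof -
  have "indep_set (\<Union>N. sigma_sets (space M) (increment_events a b N)) (\<Union>N. sigma_sets (space M) (increment_events b c N))"
  proof (rule indep_setI)
    show "(\<Union>N. sigma_sets (space M) (increment_events a b N)) \<subseteq> events"
      "(\<Union>N. sigma_sets (space M) (increment_events b c N)) \<subseteq> events"
      using sets.sigma_sets_subset[OF increment_events_in_sets] assms by (meson UN_least order_trans)+
  next
    fix E E' assume "E \<in> (\<Union>N. sigma_sets (space M) (increment_events a b N))"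
      "E' \<in> (\<Union>N. sigma_sets (space M) (increment_events b c N))"
    then obtain N N' where "E \<in> sigma_sets (space M) (increment_events a b N)"
      "E' \<in> sigma_sets (space M) (increment_events b c N')" by blast
    then have "E \<in> sigma_sets (space M) (increment_events a b (max N N'))"
      "E' \<in> sigma_sets (space M) (increment_events b c (max N N'))"
      by (auto intro: subsetD[OF increment_events_mono[of N "max N N'" a b]]
          subsetD[OF increment_events_mono[of N' "max N N'" b c]])
    then show "prob (E \<inter> E') = prob E * prob E'"
      using indep_setD[OF indep_increment_events[OF assms]] by blast
  qed
  then show ?thesis
    unfolding sets_increments by (intro indep_set_sigma_sets Int_stable_increment_events)
qed

lemma increments_le_in_sets:
  assumes a: "0 \<le> a" and y: "a \<le> y" "y < b"
  shows "{\<omega> \<in> space M. i \<le> A y \<omega> - A a \<omega>} \<in> sets (increments a b)"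
proof -
  let ?g = "\<lambda>N. a + (b - a) * real (dyadic_index a (b - a) y N) / 2^N"
  have L: "0 < b - a" using y by simp
  have "i \<le> A y \<omega> - A a \<omega> \<longleftrightarrow> (\<forall>N. i \<le> A (?g N) \<omega> - A a \<omega>)" if \<omega>: "\<omega> \<in> space M" for \<omega>
  proof -
    have "A a \<omega> \<le> A y \<omega>" "\<And>N. A a \<omega> \<le> A (?g N) \<omega>"
      using arrivals_mono[OF \<omega> a] y L by auto
    moreover have "A a \<omega> + i \<le> A y \<omega> \<longleftrightarrow> (\<forall>N. A a \<omega> + i \<le> A (?g N) \<omega>)"
      using dyadic_approx[OF \<omega> a L, of y] y by simp
    ultimately show ?thesis by (metis le_diff_conv2 add.commute)
  qed
  then have "{\<omega> \<in> space M. i \<le> A y \<omega> - A a \<omega>} = (\<Inter>N. {\<omega> \<in> space (increments a b). i \<le> A (?g N) \<omega> - A a \<omega>})"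
    by auto
  moreover have "{\<omega> \<in> space (increments a b). i \<le> A (?g N) \<omega> - A a \<omega>} \<in> sets (increments a b)" for N
  proof -
    have "dyadic_index a (b - a) y N \<le> 2^N" using dyadic_index_le[OF L y(1), of N] y(2) by simp
    note [measurable] = measurable_dyadic_increment[OF this, of a b]
    show ?thesis by measurable
  qed
  ultimately show ?thesis by auto
qed

definition epoch_after :: "real \<Rightarrow> real \<Rightarrow> nat \<Rightarrow> 'a \<Rightarrow> real" where
  "epoch_after a b i \<omega> = (if 0 < i \<and> i \<le> A b \<omega> - A a \<omega> then arrival_time A (A a \<omega> + i) \<omega> else 0)"

lemma measurable_increment:
  "(\<lambda>\<omega>. A b \<omega> - A a \<omega>) \<in> measurable (increments a b) (count_space UNIV)"
  using measurable_dyadic_increment[of 1 0 a b] by simp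

lemma borel_measurable_epoch_after:
  assumes a: "0 \<le> a" and b: "a \<le> b"
  shows "epoch_after a b i \<in> borel_measurable (increments a b)"
proof (rule borel_measurableI_le)
  fix y :: real
  define C where "C = {\<omega> \<in> space (increments a b). 0 < i \<and> i \<le> A b \<omega> - A a \<omega>}"
  define D where "D = (if y < a then {} else if b \<le> y then space M else {\<omega> \<in> space M. i \<le> A y \<omega> - A a \<omega>})"
  have C: "C \<in> sets (increments a b)"
    unfolding C_def using measurable_increment[of b a] by measurable
  have D: "D \<in> sets (increments a b)"
    using increments_le_in_sets[OF a, of y b i] sets.top[of "increments a b"] by (simp add: D_def)
  have "epoch_after a b i \<omega> \<le> y \<longleftrightarrow> \<omega> \<in> D" if "\<omega> \<in> C" for \<omega>
  proof -
    have \<omega>: "\<omega> \<in> space M" and i: "0 < i" "i \<le> A b \<omega> - A a \<omega>" using that by (auto simp: C_def)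
    have ab: "A a \<omega> \<le> A b \<omega>" by (rule arrivals_mono[OF \<omega> a b])
    then have reached: "A a \<omega> + i \<le> A b \<omega>" using i by linarith
    have "epoch_after a b i \<omega> \<le> y \<longleftrightarrow> 0 \<le> y \<and> A a \<omega> + i \<le> A y \<omega>"
      using i arrival_time_le_iff[OF \<omega> _ reached] a b by (simp add: epoch_after_def)
    also have "\<dots> \<longleftrightarrow> \<omega> \<in> D"
    proof -
      consider "y < a" | "b \<le> y" | "a \<le> y" "y < b" by linarith
      then show ?thesis
      proof cases
        case 1
        then show ?thesis using arrivals_mono[OF \<omega>, of y a] i by (auto simp: D_def)
      next
        case 2
        then show ?thesis using arrivals_mono[OF \<omega> _ 2] a b reached \<omega> by (auto simp: D_def)
      next
        case 3
        then show ?thesis using arrivals_mono[OF \<omega> a 3(1)] a \<omega> by (auto simp: D_def)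
      qed
    qed
    finally show ?thesis .
  qed
  then have "{\<omega> \<in> space (increments a b). epoch_after a b i \<omega> \<le> y} =
      (C \<inter> D) \<union> ((space M - C) \<inter> {\<omega> \<in> space M. 0 \<le> y})"
    by (auto simp: C_def epoch_after_def)
  also have "\<dots> \<in> sets (increments a b)"
  proof -
    have "space M - C \<in> sets (increments a b)" using sets.compl_sets[OF C] by simp
    then show ?thesis using C D sets.top[of "increments a b"] by (cases "0 \<le> y") auto
  qed
  finally show "{\<omega> \<in> space (increments a b). epoch_after a b i \<omega> \<le> y} \<in> sets (increments a b)" .
qed

definition arrival_sum :: "real \<Rightarrow> real \<Rightarrow> (real \<Rightarrow> ennreal) \<Rightarrow> 'a \<Rightarrow> ennreal" where
  "arrival_sum a b F \<omega> = (\<Sum>k. if A a \<omega> < k \<and> k \<le> A b \<omega> then F (arrival_time A k \<omega>) else 0)"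

lemma borel_measurable_arrival_sum:
  assumes a: "0 \<le> a" and b: "a \<le> b" and F: "F \<in> borel_measurable borel"
  shows "arrival_sum a b F \<in> borel_measurable (increments a b)"
proof -
  note [measurable] = measurable_increment[of b a] borel_measurable_epoch_after[OF a b] F
  have "(\<lambda>\<omega>. \<Sum>i. if 0 < i \<and> i \<le> A b \<omega> - A a \<omega> then F (epoch_after a b i \<omega>) else 0)
      \<in> borel_measurable (increments a b)"
    by measurable
  moreover have "(\<Sum>i. if 0 < i \<and> i \<le> A b \<omega> - A a \<omega> then F (epoch_after a b i \<omega>) else 0) = arrival_sum a b F \<omega>"
    if "\<omega> \<in> space (increments a b)" for \<omega>
  proof -
    have ab: "A a \<omega> \<le> A b \<omega>" using arrivals_mono[OF _ a b] that by simp
    \<comment> \<open>the \<open>i\<close>-th arrival after \<open>a\<close> is the arrival number \<open>A a + i\<close>\<close>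
    have "(\<Sum>i. if 0 < i \<and> i \<le> A b \<omega> - A a \<omega> then F (epoch_after a b i \<omega>) else 0) =
        (\<Sum>i\<in>{1..A b \<omega> - A a \<omega>}. F (arrival_time A (i + A a \<omega>) \<omega>))"
      by (subst suminf_finite[of "{1..A b \<omega> - A a \<omega>}"]) (auto simp: epoch_after_def add.commute intro!: sum.cong)
    also have "\<dots> = (\<Sum>k\<in>{Suc (A a \<omega>)..A b \<omega>}. F (arrival_time A k \<omega>))"
      using sum.shift_bounds_cl_nat_ivl[of "\<lambda>k. F (arrival_time A k \<omega>)" 1 "A a \<omega>" "A b \<omega> - A a \<omega>"] ab
      by simp
    also have "\<dots> = arrival_sum a b F \<omega>"
      unfolding arrival_sum_def by (subst suminf_finite[of "{Suc (A a \<omega>)..A b \<omega>}"]) (auto intro!: sum.cong)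
    finally show ?thesis .
  qed
  ultimately show ?thesis by (rule measurable_cong[THEN iffD1, rotated])
qed

lemma nn_integral_arrival_sum_mult:
  assumes "0 \<le> a" "a \<le> b" "b \<le> c" "F \<in> borel_measurable borel" "G \<in> borel_measurable borel"
  shows "(\<integral>\<^sup>+\<omega>. arrival_sum a b F \<omega> * arrival_sum b c G \<omega> \<partial>M) =
    (\<integral>\<^sup>+\<omega>. arrival_sum a b F \<omega> \<partial>M) * (\<integral>\<^sup>+\<omega>. arrival_sum b c G \<omega> \<partial>M)"
proof -
  have F: "arrival_sum a b F \<in> borel_measurable (increments a b)"
    and G: "arrival_sum b c G \<in> borel_measurable (increments b c)"
    using assms by (auto intro!: borel_measurable_arrival_sum)
  have subalg: "subalgebra M (increments a b)" "subalgebra M (increments b c)"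
    using assms by (auto intro!: subalgebra_increments)
  have h: "(\<lambda>p. arrival_sum a b F (fst p) * arrival_sum b c G (snd p)) \<in> borel_measurable (increments a b \<Otimes>\<^sub>M increments b c)"
    using F G by measurable
  have "(\<integral>\<^sup>+\<omega>. arrival_sum a b F \<omega> * arrival_sum b c G \<omega> \<partial>M) =
      (\<integral>\<^sup>+\<omega>. \<integral>\<^sup>+\<omega>'. arrival_sum a b F \<omega> * arrival_sum b c G \<omega>' \<partial>M \<partial>M)"
    using nn_integral_indep_set_diag[OF subalg indep_set_increments[OF assms(1-3)] h] by simp
  also have "\<dots> = (\<integral>\<^sup>+\<omega>. arrival_sum a b F \<omega> * (\<integral>\<^sup>+\<omega>'. arrival_sum b c G \<omega>' \<partial>M) \<partial>M)"
    using measurable_from_subalg[OF subalg(2) G] by (intro nn_integral_cong nn_integral_cmult)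
  also have "\<dots> = (\<integral>\<^sup>+\<omega>. arrival_sum a b F \<omega> \<partial>M) * (\<integral>\<^sup>+\<omega>. arrival_sum b c G \<omega> \<partial>M)"
    by (rule nn_integral_multc[OF measurable_from_subalg[OF subalg(1) F]])
  finally show ?thesis .
qed

section \<open>Uncorrelated arrival windows\<close>

definition window_decay :: "real \<Rightarrow> real \<Rightarrow> real \<Rightarrow> nat \<Rightarrow> 'a \<Rightarrow> ennreal" where
  "window_decay v a b k \<omega> =
     (if A a \<omega> < k \<and> k \<le> A b \<omega> then ennreal (exp (- (v - arrival_time A k \<omega>) * mu)) else 0)"

definition expected_survivors :: "real \<Rightarrow> real \<Rightarrow> ennreal" where
  "expected_survivors v s = mean_batch s * ennreal (exp (- (v - s) * mu))"

lemma suminf_survival_weight: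
  "(\<Sum>j. survival_weight v a b k j \<omega>) = of_nat (B k \<omega>) * window_decay v a b k \<omega>"
proof -
  have "(\<Sum>j. survival_weight v a b k j \<omega>) = (\<Sum>j\<in>{1..B k \<omega>}. survival_weight v a b k j \<omega>)"
    by (rule suminf_finite) (auto simp: survival_weight_def)
  also have "\<dots> = (\<Sum>j\<in>{1..B k \<omega>}. window_decay v a b k \<omega>)"
    by (rule sum.cong) (auto simp: survival_weight_def window_decay_def)
  finally show ?thesis by simp
qed

lemma arrival_sum_expected_survivors:
  "arrival_sum a b (expected_survivors v) \<omega> = (\<Sum>k. mean_batch (arrival_time A k \<omega>) * window_decay v a b k \<omega>)"
  unfolding arrival_sum_def expected_survivors_def window_decay_def by (simp add: if_distrib cong: if_cong)

lemma borel_measurable_window_decay: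
  assumes "0 \<le> a" "0 \<le> b"
  shows "window_decay v a b k \<in> borel_measurable arrival_sigma"
proof -
  have "(\<lambda>\<omega>. ennreal (exp (- (v - arrival_time A k \<omega>) * mu))) \<in> borel_measurable arrival_sigma"
    using borel_measurable_arrival_time by measurable
  moreover have "Measurable.pred arrival_sigma (\<lambda>\<omega>. A a \<omega> < k \<and> k \<le> A b \<omega>)"
    using measurable_arrivals_arrival_sigma[OF assms(1)] measurable_arrivals_arrival_sigma[OF assms(2)]
    by measurable
  ultimately show ?thesis
    unfolding window_decay_def by (intro measurable_If) (auto simp: pred_def)
qed

lemma window_decay_arrived:
  "\<omega> \<in> space M \<Longrightarrow> 0 \<le> b \<Longrightarrow> window_decay v a b k \<omega> \<noteq> 0 \<Longrightarrow> \<omega> \<in> arrived k"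
  by (auto simp: window_decay_def arrived_def split: if_splits)

lemma nn_integral_present_count:
  assumes "0 \<le> a" "0 \<le> b" "b \<le> v"
  shows "(\<integral>\<^sup>+\<omega>. present_count v a b \<omega> \<partial>M) = (\<integral>\<^sup>+\<omega>. arrival_sum a b (expected_survivors v) \<omega> \<partial>M)"
proof -
  have batch: "(\<integral>\<^sup>+\<omega>. window_decay v a b k \<omega> * (\<Prod>k'\<in>{k}. of_nat (B k' \<omega>)) \<partial>M) =
      (\<integral>\<^sup>+\<omega>. window_decay v a b k \<omega> * (\<Prod>k'\<in>{k}. mean_batch (arrival_time A k' \<omega>)) \<partial>M)" for k
  proof (cases "k = 0")
    case False
    then show ?thesis
      using assms window_decay_arrived
      by (intro nn_integral_prod_batch_sizes[where n = k] borel_measurable_window_decay) auto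
  qed (simp add: window_decay_def)
  have weight: "survival_weight v a b k j \<in> borel_measurable M" for k j
    using assms(1,2) by (rule borel_measurable_survival_weight)
  have decay: "window_decay v a b k \<in> borel_measurable M" for k
    using assms by (intro measurable_from_subalg[OF subalgebra_arrival_sigma] borel_measurable_window_decay)
  have "(\<integral>\<^sup>+\<omega>. present_count v a b \<omega> \<partial>M) = (\<Sum>k. \<Sum>j. \<integral>\<^sup>+\<omega>. survival_weight v a b k j \<omega> \<partial>M)"
    unfolding present_count_def using assms
    by (simp add: nn_integral_suminf2 borel_measurable_present nn_integral_present_eq_survival_weight)
  also have "\<dots> = (\<Sum>k. \<integral>\<^sup>+\<omega>. window_decay v a b k \<omega> * of_nat (B k \<omega>) \<partial>M)"
    using weight by (simp add: nn_integral_suminf[symmetric] suminf_survival_weight mult.commute)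
  also have "\<dots> = (\<Sum>k. \<integral>\<^sup>+\<omega>. mean_batch (arrival_time A k \<omega>) * window_decay v a b k \<omega> \<partial>M)"
    using batch by (simp add: mult.commute)
  also have "\<dots> = (\<integral>\<^sup>+\<omega>. arrival_sum a b (expected_survivors v) \<omega> \<partial>M)"
    unfolding arrival_sum_expected_survivors using decay
      measurable_compose[OF borel_measurable_arrival_time_M borel_measurable_mean_batch]
    by (intro nn_integral_suminf[symmetric]) measurable
  finally show ?thesis .
qed

lemma borel_measurable_expected_survivors: "expected_survivors v \<in> borel_measurable borel"
  unfolding expected_survivors_def using borel_measurable_mean_batch by measurable

lemma borel_measurable_batch_window_decay:
  assumes "0 \<le> a" "0 \<le> b"
  shows "(\<lambda>\<omega>. of_nat (B k \<omega>) * window_decay v a b k \<omega>) \<in> borel_measurable M"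
  unfolding suminf_survival_weight[symmetric]
  using borel_measurable_survival_weight[OF assms] by measurable

lemma nn_integral_present_mult_adjacent:
  assumes "0 \<le> a" "a \<le> b" "b \<le> c" "b \<le> v" "c \<le> v'"
  shows "(\<integral>\<^sup>+\<omega>. present v a b k j \<omega> * present v' b c k' j' \<omega> \<partial>M) =
    (\<integral>\<^sup>+\<omega>. survival_weight v a b k j \<omega> * survival_weight v' b c k' j' \<omega> \<partial>M)"
proof (cases "(k, j) = (k', j')")
  case True
  then have "(\<lambda>\<omega>. present v a b k j \<omega> * present v' b c k' j' \<omega>) = (\<lambda>_. 0)"
    "(\<lambda>\<omega>. survival_weight v a b k j \<omega> * survival_weight v' b c k' j' \<omega>) = (\<lambda>_. 0)"
    by (auto simp: fun_eq_iff present_def survival_weight_def)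
  then show ?thesis by simp
qed (use assms in \<open>auto intro: nn_integral_present_mult\<close>)

lemma nn_integral_batches_mult_adjacent:
  assumes a: "0 \<le> a" "a \<le> b" and c: "b \<le> c"
  shows "(\<integral>\<^sup>+\<omega>. (of_nat (B k \<omega>) * window_decay v a b k \<omega>) * (of_nat (B k' \<omega>) * window_decay v' b c k' \<omega>) \<partial>M) =
    (\<integral>\<^sup>+\<omega>. (mean_batch (arrival_time A k \<omega>) * window_decay v a b k \<omega>) *
      (mean_batch (arrival_time A k' \<omega>) * window_decay v' b c k' \<omega>) \<partial>M)"
proof (cases "k = k' \<or> k = 0 \<or> k' = 0")
  case True
  then have "window_decay v a b k \<omega> = 0 \<or> window_decay v' b c k' \<omega> = 0" for \<omega>
    by (auto simp: window_decay_def)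
  then have "(\<lambda>\<omega>. (of_nat (B k \<omega>) * window_decay v a b k \<omega>) * (of_nat (B k' \<omega>) * window_decay v' b c k' \<omega>)) = (\<lambda>_. 0)"
    "(\<lambda>\<omega>. (mean_batch (arrival_time A k \<omega>) * window_decay v a b k \<omega>) *
      (mean_batch (arrival_time A k' \<omega>) * window_decay v' b c k' \<omega>)) = (\<lambda>_. 0)"
    by (auto simp: fun_eq_iff)
  then show ?thesis by simp
next
  case False
  have b: "0 \<le> b" and c0: "0 \<le> c" using a c by auto
  let ?h = "\<lambda>\<omega>. window_decay v a b k \<omega> * window_decay v' b c k' \<omega>"
  have "?h \<in> borel_measurable arrival_sigma"
    using borel_measurable_window_decay a b c0 by measurable
  moreover have "\<omega> \<in> arrived (max k k')" if "\<omega> \<in> space M" "?h \<omega> \<noteq> 0" for \<omega>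
    using that window_decay_arrived[OF _ b, of \<omega> v a k] window_decay_arrived[OF _ c0, of \<omega> v' b k']
    by (cases "k \<le> k'") (auto simp: max_def)
  ultimately have "(\<integral>\<^sup>+\<omega>. ?h \<omega> * (\<Prod>i\<in>{k, k'}. of_nat (B i \<omega>)) \<partial>M) =
      (\<integral>\<^sup>+\<omega>. ?h \<omega> * (\<Prod>i\<in>{k, k'}. mean_batch (arrival_time A i \<omega>)) \<partial>M)"
    using False by (intro nn_integral_prod_batch_sizes) auto
  then show ?thesis using False by (simp add: mult_ac)
qed

text \<open>After integrating out the works and the batch sizes, the counts of two adjacent arrival windows
  depend on the arrival process only through its independent increments on the two windows.\<close>

lemma nn_integral_present_count_mult_adjacent:
  assumes a: "0 \<le> a" "a \<le> b" and c: "b \<le> c" and v: "b \<le> v" "c \<le> v'"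
  shows "(\<integral>\<^sup>+\<omega>. present_count v a b \<omega> * present_count v' b c \<omega> \<partial>M) =
    (\<integral>\<^sup>+\<omega>. present_count v a b \<omega> \<partial>M) * (\<integral>\<^sup>+\<omega>. present_count v' b c \<omega> \<partial>M)"
proof -
  have b: "0 \<le> b" and c0: "0 \<le> c" using a c by auto
  have weights: "survival_weight v a b k j \<in> borel_measurable M" "survival_weight v' b c k j \<in> borel_measurable M" for k j
    using a b c0 by (auto intro: borel_measurable_survival_weight)
  have decays: "(\<lambda>\<omega>. mean_batch (arrival_time A k \<omega>) * window_decay v a b k \<omega>) \<in> borel_measurable M"
    "(\<lambda>\<omega>. mean_batch (arrival_time A k \<omega>) * window_decay v' b c k \<omega>) \<in> borel_measurable M" for k
    using measurable_from_subalg[OF subalgebra_arrival_sigma borel_measurable_window_decay[OF a(1) b]]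
      measurable_from_subalg[OF subalgebra_arrival_sigma borel_measurable_window_decay[OF b c0]]
      measurable_compose[OF borel_measurable_arrival_time_M borel_measurable_mean_batch]
    by (auto intro!: borel_measurable_times_ennreal)
  have "(\<integral>\<^sup>+\<omega>. present_count v a b \<omega> * present_count v' b c \<omega> \<partial>M) =
      (\<Sum>k. \<Sum>k'. \<Sum>j. \<Sum>j'. \<integral>\<^sup>+\<omega>. survival_weight v a b k j \<omega> * survival_weight v' b c k' j' \<omega> \<partial>M)"
    unfolding present_count_def nn_integral_present_mult_adjacent[OF assms, symmetric] using a b c0
    by (intro nn_integral_suminf2_mult_suminf2 borel_measurable_present)
  also have "\<dots> = (\<integral>\<^sup>+\<omega>. (\<Sum>k. of_nat (B k \<omega>) * window_decay v a b k \<omega>) *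
      (\<Sum>k. of_nat (B k \<omega>) * window_decay v' b c k \<omega>) \<partial>M)"
    unfolding suminf_survival_weight[symmetric] using weights
    by (intro nn_integral_suminf2_mult_suminf2[symmetric])
  also have "\<dots> = (\<Sum>k. \<Sum>k'. \<integral>\<^sup>+\<omega>. (of_nat (B k \<omega>) * window_decay v a b k \<omega>) *
      (of_nat (B k' \<omega>) * window_decay v' b c k' \<omega>) \<partial>M)"
    using a b c0 by (intro nn_integral_suminf_mult_suminf borel_measurable_batch_window_decay)
  also have "\<dots> = (\<integral>\<^sup>+\<omega>. arrival_sum a b (expected_survivors v) \<omega> * arrival_sum b c (expected_survivors v') \<omega> \<partial>M)"
    unfolding nn_integral_batches_mult_adjacent[OF a c] arrival_sum_expected_survivors using decays
    by (intro nn_integral_suminf_mult_suminf[symmetric])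
  also have "\<dots> = (\<integral>\<^sup>+\<omega>. arrival_sum a b (expected_survivors v) \<omega> \<partial>M) *
      (\<integral>\<^sup>+\<omega>. arrival_sum b c (expected_survivors v') \<omega> \<partial>M)"
    using a c by (intro nn_integral_arrival_sum_mult borel_measurable_expected_survivors)
  also have "\<dots> = (\<integral>\<^sup>+\<omega>. present_count v a b \<omega> \<partial>M) * (\<integral>\<^sup>+\<omega>. present_count v' b c \<omega> \<partial>M)"
    using a b c v by (simp add: nn_integral_present_count)
  finally show ?thesis .
qed

section \<open>Moments of the queue length\<close>

lemma borel_measurable_queue_length:
  assumes "0 \<le> u"
  shows "(\<lambda>\<omega>. real (queue_length A B S u \<omega>)) \<in> borel_measurable M"
proof -
  have "(\<lambda>\<omega>. enn2real (present_count u 0 u \<omega>)) \<in> borel_measurable M"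
    using borel_measurable_present_count[of 0 u u] assms by measurable
  then show ?thesis
    by (rule measurable_cong[THEN iffD1, rotated])
       (simp add: queue_length_eq_present_count[symmetric])
qed

lemma nn_integral_queue_length_later:
  assumes t: "0 \<le> t" and \<delta>: "0 \<le> \<delta>"
  shows "(\<integral>\<^sup>+\<omega>. ennreal (real (queue_length A B S (t + \<delta>) \<omega>)) \<partial>M) =
    ennreal (exp (- \<delta> * mu)) * (\<integral>\<^sup>+\<omega>. ennreal (real (queue_length A B S t \<omega>)) \<partial>M) +
    (\<integral>\<^sup>+\<omega>. present_count (t + \<delta>) t (t + \<delta>) \<omega> \<partial>M)"
proof -
  have "(\<integral>\<^sup>+\<omega>. ennreal (real (queue_length A B S (t + \<delta>) \<omega>)) \<partial>M) =
      (\<integral>\<^sup>+\<omega>. present_count (t + \<delta>) 0 t \<omega> + present_count (t + \<delta>) t (t + \<delta>) \<omega> \<partial>M)"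
    using assms by (intro nn_integral_cong) (simp add: queue_length_eq_present_count present_count_split[of _ 0 t "t + \<delta>"])
  also have "\<dots> = (\<integral>\<^sup>+\<omega>. present_count (t + \<delta>) 0 t \<omega> \<partial>M) + (\<integral>\<^sup>+\<omega>. present_count (t + \<delta>) t (t + \<delta>) \<omega> \<partial>M)"
    using assms by (intro nn_integral_add borel_measurable_present_count) auto
  also have "(\<integral>\<^sup>+\<omega>. present_count (t + \<delta>) 0 t \<omega> \<partial>M) =
      ennreal (exp (- \<delta> * mu)) * (\<integral>\<^sup>+\<omega>. present_count t 0 t \<omega> \<partial>M)"
    using assms by (intro nn_integral_present_count_later) auto
  also have "(\<integral>\<^sup>+\<omega>. present_count t 0 t \<omega> \<partial>M) = (\<integral>\<^sup>+\<omega>. ennreal (real (queue_length A B S t \<omega>)) \<partial>M)"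
    by (intro nn_integral_cong) (simp add: queue_length_eq_present_count)
  finally show ?thesis .
qed

lemma nn_integral_queue_length_mult_later:
  assumes t: "0 \<le> t" and \<delta>: "0 \<le> \<delta>"
  shows "(\<integral>\<^sup>+\<omega>. ennreal (real (queue_length A B S t \<omega>) * real (queue_length A B S (t + \<delta>) \<omega>)) \<partial>M) =
    ennreal (exp (- \<delta> * mu)) *
      (\<integral>\<^sup>+\<omega>. ennreal (real (queue_length A B S t \<omega>) * real (queue_length A B S t \<omega>)) \<partial>M) +
    (\<integral>\<^sup>+\<omega>. ennreal (real (queue_length A B S t \<omega>)) \<partial>M) * (\<integral>\<^sup>+\<omega>. present_count (t + \<delta>) t (t + \<delta>) \<omega> \<partial>M)"
proof -
  let ?Q = "present_count t 0 t" and ?old = "present_count (t + \<delta>) 0 t" and ?new = "present_count (t + \<delta>) t (t + \<delta>)"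
  have [measurable]: "?Q \<in> borel_measurable M" "?old \<in> borel_measurable M" "?new \<in> borel_measurable M"
    using assms by (auto intro: borel_measurable_present_count)
  have queue: "ennreal (real (queue_length A B S u \<omega>)) = present_count u 0 u \<omega>" if "\<omega> \<in> space M" for u \<omega>
    using that by (rule queue_length_eq_present_count)
  have "(\<integral>\<^sup>+\<omega>. ennreal (real (queue_length A B S t \<omega>) * real (queue_length A B S (t + \<delta>) \<omega>)) \<partial>M) =
      (\<integral>\<^sup>+\<omega>. ?Q \<omega> * ?old \<omega> + ?Q \<omega> * ?new \<omega> \<partial>M)"
    using assms
    by (intro nn_integral_cong) (simp add: ennreal_mult queue present_count_split[of _ 0 t "t + \<delta>"] distrib_left)
  also have "\<dots> = (\<integral>\<^sup>+\<omega>. ?Q \<omega> * ?old \<omega> \<partial>M) + (\<integral>\<^sup>+\<omega>. ?Q \<omega> * ?new \<omega> \<partial>M)"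
    by (rule nn_integral_add) measurable
  also have "(\<integral>\<^sup>+\<omega>. ?Q \<omega> * ?old \<omega> \<partial>M) = ennreal (exp (- \<delta> * mu)) * (\<integral>\<^sup>+\<omega>. ?Q \<omega> * ?Q \<omega> \<partial>M)"
    using assms by (intro nn_integral_present_count_mult_later) auto
  also have "(\<integral>\<^sup>+\<omega>. ?Q \<omega> * ?new \<omega> \<partial>M) = (\<integral>\<^sup>+\<omega>. ?Q \<omega> \<partial>M) * (\<integral>\<^sup>+\<omega>. ?new \<omega> \<partial>M)"
    using assms by (intro nn_integral_present_count_mult_adjacent) auto
  also have "(\<integral>\<^sup>+\<omega>. ?Q \<omega> * ?Q \<omega> \<partial>M) =
      (\<integral>\<^sup>+\<omega>. ennreal (real (queue_length A B S t \<omega>) * real (queue_length A B S t \<omega>)) \<partial>M)"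
    by (intro nn_integral_cong) (simp add: ennreal_mult queue)
  also have "(\<integral>\<^sup>+\<omega>. ?Q \<omega> \<partial>M) = (\<integral>\<^sup>+\<omega>. ennreal (real (queue_length A B S t \<omega>)) \<partial>M)"
    by (intro nn_integral_cong) (simp add: queue)
  finally show ?thesis .
qed

end

theorem proposition2:
  fixes M :: "'a measure" and lam :: "real \<Rightarrow> real" and beta :: "real \<Rightarrow> nat pmf"
    and mu t \<delta> :: real and A :: "real \<Rightarrow> 'a \<Rightarrow> nat" and B :: "nat \<Rightarrow> 'a \<Rightarrow> nat"
    and S :: "nat \<Rightarrow> nat \<Rightarrow> 'a \<Rightarrow> real"
  assumes model: "batch_model M lam beta mu A B S"
    and t: "0 \<le> t" and \<delta>: "0 \<le> \<delta>"
    and sq_int_t: "integrable M (\<lambda>\<omega>. (real (queue_length A B S t \<omega>))\<^sup>2)"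
    and sq_int_td: "integrable M (\<lambda>\<omega>. (real (queue_length A B S (t + \<delta>) \<omega>))\<^sup>2)"
  shows "covariance_of M (\<lambda>\<omega>. real (queue_length A B S t \<omega>))
                         (\<lambda>\<omega>. real (queue_length A B S (t + \<delta>) \<omega>))
         = variance_of M (\<lambda>\<omega>. real (queue_length A B S t \<omega>)) * exp (- mu * \<delta>)"
proof -
  interpret batch_queue M lam beta mu A B S by (rule batch_queue.intro[OF model])
  have "covariance_of M (\<lambda>\<omega>. real (queue_length A B S t \<omega>)) (\<lambda>\<omega>. real (queue_length A B S (t + \<delta>) \<omega>)) =
      variance_of M (\<lambda>\<omega>. real (queue_length A B S t \<omega>)) * exp (- \<delta> * mu)"
    using t \<delta>
    by (intro covariance_of_eq_variance_of_mult[OF _ _ sq_int_t _ _ sq_int_td _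
        nn_integral_queue_length_later[OF t \<delta>] nn_integral_queue_length_mult_later[OF t \<delta>]]
        borel_measurable_queue_length) auto
  then show ?thesis by (simp add: mult.commute)
qed

end
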